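(* Let $n,m,p,T\in\mathbb{N}$ and $L\in[1,T]$. An input sequence $u_{[0,T-1]}\in\mathbb{R}^{mT}$ is universal for determining the $L$-restricted behavior (for systems with state dimension $n$, input dimension $m$, output dimension $p$) if and only if it is persistently exciting of order $n+L$.
   Context: For integers $a\le b$, $[a,b]=\{c\in\mathbb{Z}: a\le c\le b\}$. For $v:\mathbb{Z}_+\to\mathbb{R}^q$, $v_{[0,T-1]}=\begin{bmatrix}v(0)^\top & \cdots & v(T-1)^\top\end{bmatrix}^\top$. For $k\in[1,T]$ the Hankel matrix of depth $k$ is the $qk\times(T-k+1)$ block matrix $\mathcal{H}_k(v_{[0,T-1]})$ whose $(i,j)$ block ($i\in[0,k-1]$, $j\in[0,T-k]$) is $v(i+j)$. The sequence $v_{[0,T-1]}$ is persistently exciting of order $k$ if $k\le T$ and $\mathcal{H}_k(v_{[0,T-1]})$ has full row rank (if $k>T$ it is not persistently exciting of order $k$). Systems: $x(t+1)=Ax(t)+Bu(t)$, $y(t)=Cx(t)+Du(t)$ with $(A,B,C,D)\in\mathbb{R}^{n\times n}\times\mathbb{R}^{n\times m}\times\mathbb{R}^{p\times n}\times\mathbb{R}^{p\times m}$; $\mathcal{M}_{\rm cont}$ is the set of such quadruples with $(A,B)$ controllable. The input-output behavior $\mathfrak{B}(A,B,C,D)$ is the set of $(u,y):\mathbb{Z}_+\to\mathbb{R}^m\times\mathbb{R}^p$ for which some $x:\mathbb{Z}_+\to\mathbb{R}^n$ satisfies both equations; the $k$-restricted behavior is $\mathfrak{B}_k(A,B,C,D)=\{\begin{bmatrix}u_{[0,k-1]}\\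 y_{[0,k-1]}\end{bmatrix} : (u,y)\in\mathfrak{B}(A,B,C,D)\}$. An input $u_{[0,T-1]}$ is universal for determining the $L$-restricted behavior if for every $(A,B,C,D)\in\mathcal{M}_{\rm cont}$ and every $y_{[0,T-1]}$ with $\begin{bmatrix}u_{[0,T-1]}\\ y_{[0,T-1]}\end{bmatrix}\in\mathfrak{B}_T(A,B,C,D)$ one has $\mathfrak{B}_L(A,B,C,D)=\operatorname{im}\begin{bmatrix}\mathcal{H}_L(u_{[0,T-1]})\\ \mathcal{H}_L(y_{[0,T-1]})\end{bmatrix}$. *)

theory Defs
  imports "Jordan_Normal_Form.DL_Rank"
begin

definition stack :: "nat \<Rightarrow> nat \<Rightarrow> (nat \<Rightarrow> real vec) \<Rightarrow> real vec" where
  "stack q k v = vec (q * k) (\<lambda>i. v (i div q) $ (i mod q))"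

definition hankel :: "nat \<Rightarrow> nat \<Rightarrow> nat \<Rightarrow> (nat \<Rightarrow> real vec) \<Rightarrow> real mat" where
  "hankel q k T v = mat (q * k) (T - k + 1) (\<lambda>(r, c). v (r div q + c) $ (r mod q))"

definition full_row_rank :: "real mat \<Rightarrow> bool" where
  "full_row_rank M \<longleftrightarrow> vec_space.rank (dim_row M) M = dim_row M"

definition persistently_exciting :: "nat \<Rightarrow> nat \<Rightarrow> nat \<Rightarrow> (nat \<Rightarrow> real vec) \<Rightarrow> bool" where
  "persistently_exciting q T k v \<longleftrightarrow> k \<le> T \<and> full_row_rank (hankel q k T v)"

definition mat_image :: "real mat \<Rightarrow> real vec set" where
  "mat_image M = {M *\<^sub>v x | x. x \<in> carrier_vec (dim_col M)}"

definition ctrb_mat :: "nat \<Rightarrow> nat \<Rightarrow> real mat \<Rightarrow> real mat \<Rightarrow> real mat" where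
  "ctrb_mat n m A B = mat n (n * m) (\<lambda>(i, j). ((A ^\<^sub>m (j div m)) * B) $$ (i, j mod m))"

definition controllable :: "nat \<Rightarrow> nat \<Rightarrow> real mat \<Rightarrow> real mat \<Rightarrow> bool" where
  "controllable n m A B \<longleftrightarrow> vec_space.rank n (ctrb_mat n m A B) = n"

definition M_cont :: "nat \<Rightarrow> nat \<Rightarrow> nat \<Rightarrow> (real mat \<times> real mat \<times> real mat \<times> real mat) set" where
  "M_cont n m p = {(A, B, C, D). A \<in> carrier_mat n n \<and> B \<in> carrier_mat n m \<and>
      C \<in> carrier_mat p n \<and> D \<in> carrier_mat p m \<and> controllable n m A B}"

definition behavior :: "nat \<Rightarrow> nat \<Rightarrow> nat \<Rightarrow> real mat \<Rightarrow> real mat \<Rightarrow> real mat \<Rightarrow> real mat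
    \<Rightarrow> ((nat \<Rightarrow> real vec) \<times> (nat \<Rightarrow> real vec)) set" where
  "behavior n m p A B C D = {(u, y). (\<forall>t. u t \<in> carrier_vec m \<and> y t \<in> carrier_vec p) \<and>
      (\<exists>x. \<forall>t. x t \<in> carrier_vec n \<and> x (Suc t) = A *\<^sub>v x t + B *\<^sub>v u t \<and>
                y t = C *\<^sub>v x t + D *\<^sub>v u t)}"

definition restricted_behavior :: "nat \<Rightarrow> nat \<Rightarrow> nat \<Rightarrow> nat \<Rightarrow> real mat \<Rightarrow> real mat \<Rightarrow> real mat
    \<Rightarrow> real mat \<Rightarrow> real vec set" where
  "restricted_behavior n m p k A B C D =
     {stack m k u @\<^sub>v stack p k y | u y. (u, y) \<in> behavior n m p A B C D}"

definition universal :: "nat \<Rightarrow> nat \<Rightarrow> nat \<Rightarrow> nat \<Rightarrow> nat \<Rightarrow> (nat \<Rightarrow> real vec) \<Rightarrow> bool" where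
  "universal n m p T L u \<longleftrightarrow>
     (\<forall>A B C D y. (A, B, C, D) \<in> M_cont n m p \<longrightarrow>
        (\<forall>t<T. y t \<in> carrier_vec p) \<longrightarrow>
        stack m T u @\<^sub>v stack p T y \<in> restricted_behavior n m p T A B C D \<longrightarrow>
        restricted_behavior n m p L A B C D =
          mat_image (hankel m L T u @\<^sub>r hankel p L T y))"

end

theory Submission
  imports Defs "Jordan_Normal_Form.Jordan_Normal_Form"
begin

text \<open>
  If u is persistently exciting of order n + L and (A, B) is controllable, the matrix stacking
  the states x(0), ..., x(T - L) on top of the input Hankel matrix of depth L has full row rank:
  a vector in its left kernel is a relation between the state and the next L inputs, which the
  state equation and a linear dependence among the \<xi>^T A^i, i \<le> n, turn into a relation among
  the windows of u of length n + L. Hence every initial state and input window is produced by a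
  combination of data columns, and since the system is linear and time-invariant, the same
  combination reproduces the output window.

  Conversely, if u is not persistently exciting, some g annihilates all its windows of length
  n + L. Dividing the polynomials built from g repeatedly by z - \<mu> yields a controllable system
  whose output is, along the data, a fixed combination of the next L inputs; its free response
  from a suitable initial state violates this relation, so it is not spanned by the data.
\<close>

context vec_space
begin

lemma span_cols_eq_image:
  assumes M: "M \<in> carrier_mat n c"
  shows "span (set (cols M)) = {M *\<^sub>v v | v. v \<in> carrier_vec c}"
proof -
  have sub: "set (cols M) \<subseteq> carrier_vec n" using M cols_dim by blast
  have lincomb: "lincomb_list f (cols M) = M *\<^sub>v vec c f" for f
  proof -
    have "lincomb_list f (cols M) = mat_of_cols n (cols M) *\<^sub>v vec (length (cols M)) f"
      by (rule lincomb_list_as_mat_mult) (use sub in auto)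
    then show ?thesis using mat_of_cols_cols[of M] M by simp
  qed
  have "span (set (cols M)) = {lincomb_list f (cols M) | f. f \<in> {0..<length (cols M)} \<rightarrow> carrier class_ring}"
    using span_list_as_span[OF sub] unfolding span_list_def by simp
  also have "\<dots> = {M *\<^sub>v v | v. v \<in> carrier_vec c}"
  proof (safe)
    fix f show "\<exists>v. lincomb_list f (cols M) = M *\<^sub>v v \<and> v \<in> carrier_vec c"
      using lincomb by auto
  next
    fix v :: "'a vec" assume v: "v \<in> carrier_vec c"
    then have "M *\<^sub>v v = lincomb_list (\<lambda>i. v $ i) (cols M)" using lincomb by (metis eq_vecI carrier_vecD dim_vec index_vec)
    then show "\<exists>f. M *\<^sub>v v = lincomb_list f (cols M) \<and> f \<in> {0..<length (cols M)} \<rightarrow> carrier class_ring"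
      by auto
  qed
  finally show ?thesis .
qed

lemma rank_eq_dim_row_iff_surj:
  assumes M: "M \<in> carrier_mat n c"
  shows "rank M = n \<longleftrightarrow> (\<forall>b\<in>carrier_vec n. \<exists>v\<in>carrier_vec c. M *\<^sub>v v = b)"
proof
  let ?W = "span (set (cols M))"
  have sub: "set (cols M) \<subseteq> carrier_vec n" using M cols_dim by blast
  assume R: "rank M = n"
  have vsW: "vectorspace class_ring (vs ?W)"
    using span_is_subspace sub subspace_is_vs by simp
  obtain \<beta> where fb: "finite \<beta>" and bas: "vectorspace.basis class_ring (vs ?W) \<beta>"
    using vectorspace.finite_basis_exists[OF vsW fin_dim_span_cols[OF M]] by blast
  have card: "card \<beta> = n"
    using R vectorspace.dim_basis[OF vsW fb bas] unfolding rank_def by simp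
  have bW: "\<beta> \<subseteq> ?W" using bas vectorspace.basis_def[OF vsW] by auto
  have li: "lin_indpt \<beta>"
    using bas vectorspace.basis_def[OF vsW] span_li_not_depend(2)[OF bW span_is_submodule[OF sub]]
    by auto
  have "basis \<beta>"
    by (rule dim_li_is_basis[OF fin_dim fb _ li]) (use bW span_is_subset2[OF sub] card dim_is_n in auto)
  then have "carrier V \<subseteq> ?W" using span_subsetI[OF sub bW] unfolding basis_def by simp
  then show "\<forall>b\<in>carrier_vec n. \<exists>v\<in>carrier_vec c. M *\<^sub>v v = b"
    using span_cols_eq_image[OF M] by auto
next
  assume "\<forall>b\<in>carrier_vec n. \<exists>v\<in>carrier_vec c. M *\<^sub>v v = b"
  then have "span (set (cols M)) = carrier_vec n"
    using span_cols_eq_image[OF M] M by auto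
  then have "span_vs (set (cols M)) = V" by simp
  then show "rank M = n" unfolding rank_def using dim_is_n by simp
qed

end

lemma sum_squares_eq_0_imp_zero_vec:
  fixes z :: "real vec"
  assumes z: "z \<in> carrier_vec r" and s: "(\<Sum>i<r. z $ i * z $ i) = 0"
  shows "z = 0\<^sub>v r"
proof -
  have "\<forall>i\<in>{..<r}. z $ i * z $ i = 0"
    using s by (subst (asm) sum_nonneg_eq_0_iff) auto
  then show ?thesis using z by (intro eq_vecI) auto
qed

lemma mult_mat_vec_index_sum:
  "A \<in> carrier_mat r c \<Longrightarrow> v \<in> carrier_vec c \<Longrightarrow> i < r \<Longrightarrow> (A *\<^sub>v v) $ i = (\<Sum>k<c. A $$ (i,k) * v $ k)"
  by (simp add: mult_mat_vec_def scalar_prod_def lessThan_atLeast0)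

lemma scalar_prod_sum: "w \<in> carrier_vec n \<Longrightarrow> v \<bullet> w = (\<Sum>k<n. v $ k * w $ k)"
  unfolding scalar_prod_def by (simp add: lessThan_atLeast0)

lemma rows_indep_if_surj:
  fixes M :: "real mat"
  assumes M: "M \<in> carrier_mat r c"
    and surj: "\<forall>b\<in>carrier_vec r. \<exists>v\<in>carrier_vec c. M *\<^sub>v v = b"
    and z: "z \<in> carrier_vec r" and comb: "\<forall>j<c. (\<Sum>i<r. M $$ (i,j) * z $ i) = 0"
  shows "z = 0\<^sub>v r"
proof -
  obtain v where v: "v \<in> carrier_vec c" and Mv: "M *\<^sub>v v = z" using surj z by blast
  have "(\<Sum>i<r. z $ i * z $ i) = (\<Sum>i<r. (\<Sum>j<c. M $$ (i,j) * v $ j) * z $ i)"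
    using Mv mult_mat_vec_index_sum[OF M v] by (intro sum.cong) auto
  also have "\<dots> = (\<Sum>j<c. v $ j * (\<Sum>i<r. M $$ (i,j) * z $ i))"
    by (simp add: sum_distrib_left sum_distrib_right mult_ac sum.swap[of _ "{..<r}"])
  also have "\<dots> = 0" using comb by simp
  finally show ?thesis using sum_squares_eq_0_imp_zero_vec[OF z] by blast
qed

lemma surj_if_rows_indep:
  fixes M :: "real mat"
  assumes M: "M \<in> carrier_mat r c"
    and indep: "\<And>z. z \<in> carrier_vec r \<Longrightarrow> \<forall>j<c. (\<Sum>i<r. M $$ (i,j) * z $ i) = 0 \<Longrightarrow> z = 0\<^sub>v r"
    and b: "b \<in> carrier_vec r"
  shows "\<exists>v\<in>carrier_vec c. M *\<^sub>v v = b"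
proof -
  define G where "G = M * M\<^sup>T"
  have G: "G \<in> carrier_mat r r" using M unfolding G_def by auto
  have "det G \<noteq> 0"
  proof
    assume "det G = 0"
    then obtain z where z: "z \<in> carrier_vec r" "z \<noteq> 0\<^sub>v r" "G *\<^sub>v z = 0\<^sub>v r"
      using det_0_iff_vec_prod_zero_field[OF G] by blast
    define w where "w = M\<^sup>T *\<^sub>v z"
    have w: "w \<in> carrier_vec c" using M z unfolding w_def by auto
    have "w \<bullet> w = z \<bullet> (G *\<^sub>v z)"
      unfolding w_def G_def using transpose_vec_mult_scalar[OF M _ z(1), of "M\<^sup>T *\<^sub>v z"] M z
      by (auto simp: assoc_mult_mat_vec[of M r c "M\<^sup>T" r z])
    then have "(\<Sum>j<c. w $ j * w $ j) = 0" using z w by (simp add: scalar_prod_sum[OF w])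
    then have w0: "w = 0\<^sub>v c" using sum_squares_eq_0_imp_zero_vec[OF w] by blast
    have "\<forall>j<c. (\<Sum>i<r. M $$ (i,j) * z $ i) = 0"
    proof (intro allI impI)
      fix j assume j: "j < c"
      have "(\<Sum>i<r. M $$ (i,j) * z $ i) = w $ j"
        unfolding w_def using mult_mat_vec_index_sum[of "M\<^sup>T" c r z j] M z j
        by (auto intro: sum.cong)
      then show "(\<Sum>i<r. M $$ (i,j) * z $ i) = 0" using w0 j by simp
    qed
    then show False using indep[OF z(1)] z(2) by blast
  qed
  then obtain Gi where Gi: "Gi \<in> carrier_mat r r" and GGi: "G * Gi = 1\<^sub>m r"
    using det_non_zero_imp_unit[OF G] unfolding Units_def by (auto simp: ring_mat_simps)
  have "M *\<^sub>v (M\<^sup>T *\<^sub>v (Gi *\<^sub>v b)) = b"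
    using M Gi b GGi assoc_mult_mat_vec[OF G Gi b]
    by (auto simp: G_def assoc_mult_mat_vec[of M r c "M\<^sup>T" r "Gi *\<^sub>v b"])
  then show ?thesis using M Gi b by (intro bexI[of _ "M\<^sup>T *\<^sub>v (Gi *\<^sub>v b)"]) auto
qed

lemma full_rank_iff_rows_indep:
  fixes M :: "real mat"
  assumes M: "M \<in> carrier_mat r c"
  shows "vec_space.rank r M = r \<longleftrightarrow>
    (\<forall>z\<in>carrier_vec r. (\<forall>j<c. (\<Sum>i<r. M $$ (i,j) * z $ i) = 0) \<longrightarrow> z = 0\<^sub>v r)"
  using vec_space.rank_eq_dim_row_iff_surj[OF M] rows_indep_if_surj[OF M] surj_if_rows_indep[OF M]
  by blast

lemma block_index_less:
  fixes t k q m :: nat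
  assumes t: "t < k" and q: "q < m"
  shows "t * m + q < m * k"
proof -
  have "t * m + q < Suc t * m" using q by simp
  also have "\<dots> \<le> k * m" using t by (intro mult_right_mono) auto
  finally show ?thesis by (simp add: mult.commute)
qed

lemma zero_vec_if_blocks_zero:
  assumes "z \<in> carrier_vec (m * N)" and "\<forall>r<N. \<forall>q<m. z $ (r * m + q) = 0"
  shows "z = 0\<^sub>v (m * N)"
proof (rule eq_vecI)
  fix i assume "i < dim_vec (0\<^sub>v (m * N))"
  then have i: "i < m * N" by simp
  then have "m > 0" by (cases m) auto
  then have "i = (i div m) * m + i mod m" "i div m < N" "i mod m < m"
    using i by (auto simp: less_mult_imp_div_less mult.commute)
  then show "z $ i = 0\<^sub>v (m * N) $ i" using assms(2) i by (metis index_zero_vec(1))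
qed (use assms(1) in simp)

lemma sum_lessThan_mult_blocks:
  fixes f :: "nat \<Rightarrow> 'b::comm_monoid_add"
  shows "(\<Sum>i<m*N. f i) = (\<Sum>r<N. \<Sum>q<m. f (r*m+q))"
proof (induction N)
  case (Suc N)
  have "(\<Sum>i<m*Suc N. f i) = (\<Sum>i\<in>{0..<m*N}. f i) + (\<Sum>i=m*N..<m*N+m. f i)"
    by (subst sum.atLeastLessThan_concat) (auto simp: algebra_simps lessThan_atLeast0)
  also have "(\<Sum>i=m*N..<m*N+m. f i) = (\<Sum>q<m. f (N*m+q))"
    using sum.shift_bounds_nat_ivl[of f 0 "m*N" m] by (simp add: lessThan_atLeast0 algebra_simps)
  finally show ?case using Suc by (simp add: lessThan_atLeast0)
qed simp

lemma sum_lessThan_add: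
  fixes f :: "nat \<Rightarrow> 'b::comm_monoid_add"
  shows "(\<Sum>i<a+b. f i) = (\<Sum>i<a. f i) + (\<Sum>i<b. f (a + i))"
proof -
  have "(\<Sum>i<a+b. f i) = (\<Sum>i\<in>{0..<a}. f i) + (\<Sum>i=a..<a+b. f i)"
    unfolding lessThan_atLeast0 by (rule sum.atLeastLessThan_concat[symmetric]) auto
  also have "(\<Sum>i=a..<a+b. f i) = (\<Sum>i<b. f (a + i))"
    using sum.shift_bounds_nat_ivl[of f 0 a b] by (simp add: lessThan_atLeast0 add.commute)
  finally show ?thesis by (simp add: lessThan_atLeast0)
qed

lemma sum_lessThan_if_less:
  fixes f :: "nat \<Rightarrow> 'b::comm_monoid_add"
  assumes "i \<le> N"
  shows "(\<Sum>r<N. if r < i then f r else 0) = (\<Sum>r<i. f r)"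
proof -
  have "(\<Sum>r<N. if r < i then f r else 0) = (\<Sum>r\<in>{..<N} \<inter> {r. r < i}. f r)"
    by (simp add: sum.inter_restrict)
  also have "{..<N} \<inter> {r. r < i} = {..<i}" using assms by auto
  finally show ?thesis .
qed

lemma sum_lessThan_if_window:
  fixes f :: "nat \<Rightarrow> 'b::comm_monoid_add"
  assumes "i + L \<le> N"
  shows "(\<Sum>r<N. if i \<le> r \<and> r < i + L then f r else 0) = (\<Sum>l<L. f (i + l))"
proof -
  have "(\<Sum>r<N. if i \<le> r \<and> r < i + L then f r else 0) = (\<Sum>r\<in>{..<N} \<inter> {r. i \<le> r \<and> r < i + L}. f r)"
    by (simp add: sum.inter_restrict)
  also have "{..<N} \<inter> {r. i \<le> r \<and> r < i + L} = {i..<i+L}" using assms by auto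
  also have "(\<Sum>r\<in>{i..<i+L}. f r) = (\<Sum>l<L. f (i + l))"
    using sum.shift_bounds_nat_ivl[of f 0 i L] by (simp add: lessThan_atLeast0 add.commute)
  finally show ?thesis .
qed

lemma sum_atMost_split_last:
  fixes f :: "nat \<Rightarrow> 'b::comm_monoid_add"
  shows "(\<Sum>i\<le>d. f i) = (\<Sum>i<d. f i) + f d"
  by (simp add: lessThan_Suc_atMost[symmetric])

lemma stack_carrier[simp]: "stack q k v \<in> carrier_vec (q * k)"
  unfolding stack_def by simp

lemma stack_dim[simp]: "dim_vec (stack q k v) = q * k"
  unfolding stack_def by simp

lemma stack_index: "i < q * k \<Longrightarrow> stack q k v $ i = v (i div q) $ (i mod q)"
  unfolding stack_def by simp

lemma stack_index_block: "t < k \<Longrightarrow> c < q \<Longrightarrow> stack q k v $ (t * q + c) = v t $ c"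
  by (simp add: stack_index block_index_less)

lemma stack_cong: "(\<And>t. t < k \<Longrightarrow> v t = w t) \<Longrightarrow> stack q k v = stack q k w"
  by (rule eq_vecI) (auto simp: stack_index less_mult_imp_div_less mult.commute)

lemma hankel_carrier[simp]: "hankel q k T v \<in> carrier_mat (q * k) (T - k + 1)"
  unfolding hankel_def by simp

lemma hankel_dims[simp]: "dim_row (hankel q k T v) = q * k" "dim_col (hankel q k T v) = T - k + 1"
  unfolding hankel_def by simp_all

lemma hankel_index:
  "i < q * k \<Longrightarrow> j < T - k + 1 \<Longrightarrow> hankel q k T v $$ (i, j) = v (i div q + j) $ (i mod q)"
  unfolding hankel_def by simp

lemma hankel_cong:
  assumes "k \<le> T" and "\<And>t. t < T \<Longrightarrow> v t = w t"
  shows "hankel q k T v = hankel q k T w"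
proof (rule eq_matI)
  fix i j assume "i < dim_row (hankel q k T w)" and "j < dim_col (hankel q k T w)"
  then have i: "i < q * k" and j: "j < T - k + 1" by auto
  then have "i div q + j < T" using assms(1) less_mult_imp_div_less[of i k q] by (simp add: mult.commute)
  then show "hankel q k T v $$ (i,j) = hankel q k T w $$ (i,j)"
    using i j assms(2) by (simp add: hankel_index)
qed auto

lemma append_rows_index:
  assumes "A \<in> carrier_mat r1 c" and "B \<in> carrier_mat r2 c" and "i < r1 + r2" and "j < c"
  shows "(A @\<^sub>r B) $$ (i,j) = (if i < r1 then A $$ (i,j) else B $$ (i - r1, j))"
  unfolding append_rows_def using assms by (subst index_mat_four_block) auto

lemma hankel_rows_comb:
  assumes "j < T - N + 1"
  shows "(\<Sum>i<m*N. hankel m N T u $$ (i,j) * z $ i) = (\<Sum>r<N. \<Sum>q<m. z $ (r*m+q) * u (j+r) $ q)"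
  unfolding sum_lessThan_mult_blocks
proof (intro sum.cong refl)
  fix r q assume "r \<in> {..<N}" and q: "q \<in> {..<m}"
  then have "r * m + q < m * N" by (simp add: block_index_less)
  then show "hankel m N T u $$ (r*m+q, j) * z $ (r*m+q) = z $ (r*m+q) * u (j+r) $ q"
    using assms q by (simp add: hankel_index add.commute)
qed

lemma persistently_exciting_iff:
  assumes "N \<le> T"
  shows "persistently_exciting m T N u \<longleftrightarrow>
    (\<forall>g. (\<forall>j. j + N \<le> T \<longrightarrow> (\<Sum>r<N. \<Sum>q<m. g r q * u (j+r) $ q) = 0) \<longrightarrow>
         (\<forall>r<N. \<forall>q<m. g r q = 0))"
proof -
  let ?H = "hankel m N T u"
  have window: "j + N \<le> T \<longleftrightarrow> j < T - N + 1" for j using assms by auto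
  have "full_row_rank ?H \<longleftrightarrow>
    (\<forall>z\<in>carrier_vec (m*N). (\<forall>j<T-N+1. (\<Sum>r<N. \<Sum>q<m. z $ (r*m+q) * u (j+r) $ q) = 0) \<longrightarrow> z = 0\<^sub>v (m*N))"
    unfolding full_row_rank_def hankel_dims full_rank_iff_rows_indep[OF hankel_carrier]
    by (simp add: hankel_rows_comb)
  also have "\<dots> \<longleftrightarrow> (\<forall>g. (\<forall>j. j + N \<le> T \<longrightarrow> (\<Sum>r<N. \<Sum>q<m. g r q * u (j+r) $ q) = 0) \<longrightarrow>
         (\<forall>r<N. \<forall>q<m. g r q = 0))" (is "?rows \<longleftrightarrow> ?coeffs")
  proof
    assume rows: ?rows
    show ?coeffs
    proof (intro allI impI)
      fix g r q assume rel: "\<forall>j. j + N \<le> T \<longrightarrow> (\<Sum>r<N. \<Sum>q<m. g r q * u (j+r) $ q) = 0"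
        and r: "r < N" and q: "q < m"
      define z where "z = vec (m*N) (\<lambda>i. g (i div m) (i mod m))"
      have z_block: "z $ (r'*m+q') = g r' q'" if "r' < N" "q' < m" for r' q'
        using that block_index_less[OF that] by (simp add: z_def)
      have "(\<Sum>r<N. \<Sum>q<m. z $ (r*m+q) * u (j+r) $ q) = 0" if "j < T - N + 1" for j
      proof -
        have "(\<Sum>r<N. \<Sum>q<m. z $ (r*m+q) * u (j+r) $ q) = (\<Sum>r<N. \<Sum>q<m. g r q * u (j+r) $ q)"
          by (intro sum.cong refl) (simp add: z_block)
        then show ?thesis using rel window that by simp
      qed
      then have "z = 0\<^sub>v (m*N)" using rows unfolding z_def by auto
      then show "g r q = 0" using z_block[OF r q] block_index_less[OF r q] by simp
    qed
  next
    assume coeffs: ?coeffs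
    show ?rows
    proof (intro ballI impI)
      fix z :: "real vec" assume z: "z \<in> carrier_vec (m*N)"
        and rel: "\<forall>j<T-N+1. (\<Sum>r<N. \<Sum>q<m. z $ (r*m+q) * u (j+r) $ q) = 0"
      have g0: "\<forall>r<N. \<forall>q<m. z $ (r*m+q) = 0"
        using coeffs[rule_format, of "\<lambda>r q. z $ (r*m+q)"] rel window by blast
      then show "z = 0\<^sub>v (m*N)" using z by (rule zero_vec_if_blocks_zero[rotated])
    qed
  qed
  finally show ?thesis unfolding persistently_exciting_def using assms by simp
qed

lemma persistently_exciting_cong:
  assumes "\<And>t. t < T \<Longrightarrow> v t = w t"
  shows "persistently_exciting q T k v \<longleftrightarrow> persistently_exciting q T k w"
  unfolding persistently_exciting_def using hankel_cong[of k T v w q] assms by auto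

text \<open>The vectors (A^T)^k \<xi>, defined by iteration rather than as matrix powers so
  that unfolding them needs no carrier assumptions.\<close>

definition dual_orbit :: "real mat \<Rightarrow> nat \<Rightarrow> real vec \<Rightarrow> real vec" where
  "dual_orbit A k \<xi> = ((\<lambda>v. A\<^sup>T *\<^sub>v v) ^^ k) \<xi>"

lemma dual_orbit_0[simp]: "dual_orbit A 0 \<xi> = \<xi>"
  unfolding dual_orbit_def by simp

lemma dual_orbit_Suc: "dual_orbit A (Suc k) \<xi> = A\<^sup>T *\<^sub>v dual_orbit A k \<xi>"
  unfolding dual_orbit_def by simp

lemma dual_orbit_Suc_right: "dual_orbit A k (A\<^sup>T *\<^sub>v \<xi>) = dual_orbit A (Suc k) \<xi>"
  unfolding dual_orbit_def by (simp add: funpow_Suc_right del: funpow.simps)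

lemma dual_orbit_carrier:
  "A \<in> carrier_mat n n \<Longrightarrow> \<xi> \<in> carrier_vec n \<Longrightarrow> dual_orbit A k \<xi> \<in> carrier_vec n"
  by (induction k) (auto simp: dual_orbit_Suc)

lemma ctrb_block_comb:
  assumes A: "A \<in> carrier_mat n n" and B: "B \<in> carrier_mat n m" and \<xi>: "\<xi> \<in> carrier_vec n"
    and q: "q < m"
  shows "(\<Sum>i<n. (A ^\<^sub>m k * B) $$ (i,q) * \<xi> $ i) = (B\<^sup>T *\<^sub>v dual_orbit A k \<xi>) $ q"
  using B q
proof (induction k arbitrary: B m)
  case 0
  have "A ^\<^sub>m 0 * B = B" using A "0.prems" by simp
  then show ?case using "0.prems" \<xi> by (simp add: scalar_prod_sum[OF \<xi>] mult.commute)
next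
  case (Suc k)
  have AB: "A * B \<in> carrier_mat n m" using A Suc.prems by simp
  have "A ^\<^sub>m Suc k * B = A ^\<^sub>m k * (A * B)"
    using A Suc.prems by (simp add: assoc_mult_mat[of _ n n _ n _ m])
  then have "(\<Sum>i<n. (A ^\<^sub>m Suc k * B) $$ (i,q) * \<xi> $ i) = ((A * B)\<^sup>T *\<^sub>v dual_orbit A k \<xi>) $ q"
    using Suc.IH[OF AB Suc.prems(2)] by simp
  also have "(A * B)\<^sup>T *\<^sub>v dual_orbit A k \<xi> = B\<^sup>T *\<^sub>v (A\<^sup>T *\<^sub>v dual_orbit A k \<xi>)"
    using Suc.prems A dual_orbit_carrier[OF A \<xi>]
    by (auto simp: transpose_mult[OF A Suc.prems(1)] intro: assoc_mult_mat_vec)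
  finally show ?case by (simp add: dual_orbit_Suc)
qed

lemma ctrb_mat_carrier: "ctrb_mat n m A B \<in> carrier_mat n (n * m)"
  unfolding ctrb_mat_def by simp

lemma controllable_iff_dual_orbit:
  assumes A: "A \<in> carrier_mat n n" and B: "B \<in> carrier_mat n m"
  shows "controllable n m A B \<longleftrightarrow>
    (\<forall>\<xi>\<in>carrier_vec n. (\<forall>k<n. \<forall>q<m. (B\<^sup>T *\<^sub>v dual_orbit A k \<xi>) $ q = 0) \<longrightarrow> \<xi> = 0\<^sub>v n)"
proof -
  have "(\<forall>j<n*m. (\<Sum>i<n. ctrb_mat n m A B $$ (i,j) * \<xi> $ i) = 0) \<longleftrightarrow>
        (\<forall>k<n. \<forall>q<m. (B\<^sup>T *\<^sub>v dual_orbit A k \<xi>) $ q = 0)" if \<xi>: "\<xi> \<in> carrier_vec n" for \<xi>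
  proof -
    have block: "(\<Sum>i<n. ctrb_mat n m A B $$ (i, k*m+q) * \<xi> $ i) = (B\<^sup>T *\<^sub>v dual_orbit A k \<xi>) $ q"
      if "k < n" "q < m" for k q
      using ctrb_block_comb[OF A B \<xi> \<open>q < m\<close>, of k] block_index_less[OF that] that
      by (auto simp: ctrb_mat_def mult.commute intro!: sum.cong)
    have "(\<forall>j<n*m. (\<Sum>i<n. ctrb_mat n m A B $$ (i,j) * \<xi> $ i) = 0) \<longleftrightarrow>
          (\<forall>k<n. \<forall>q<m. (\<Sum>i<n. ctrb_mat n m A B $$ (i, k*m+q) * \<xi> $ i) = 0)"
    proof safe
      fix j assume all: "\<forall>k<n. \<forall>q<m. (\<Sum>i<n. ctrb_mat n m A B $$ (i, k*m+q) * \<xi> $ i) = 0"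
        and j: "j < n * m"
      then have "m > 0" by (cases m) auto
      then show "(\<Sum>i<n. ctrb_mat n m A B $$ (i,j) * \<xi> $ i) = 0"
        using all[rule_format, of "j div m" "j mod m"] j
        by (simp add: less_mult_imp_div_less)
    next
      fix k q assume "\<forall>j<n*m. (\<Sum>i<n. ctrb_mat n m A B $$ (i,j) * \<xi> $ i) = 0" "k < n" "q < m"
      then show "(\<Sum>i<n. ctrb_mat n m A B $$ (i, k*m+q) * \<xi> $ i) = 0"
        using block_index_less[of k n q m] by (simp add: mult.commute)
    qed
    then show ?thesis using block by simp
  qed
  then show ?thesis unfolding controllable_def
    using full_rank_iff_rows_indep[OF ctrb_mat_carrier] by auto
qed

lemma persistently_exciting_windows_indep:
  assumes "persistently_exciting m T N u"
    and "\<forall>j. j + N \<le> T \<longrightarrow> (\<Sum>r<N. \<Sum>q<m. g r q * u (j+r) $ q) = 0"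
  shows "\<forall>r<N. \<forall>q<m. g r q = 0"
  using assms persistently_exciting_iff[of N T m u] unfolding persistently_exciting_def by blast

lemma state_expansion:
  assumes A: "A \<in> carrier_mat n n" and B: "B \<in> carrier_mat n m"
    and xs: "\<And>t. x t \<in> carrier_vec n" and us: "\<And>t. u t \<in> carrier_vec m"
    and dyn: "\<And>t. x (Suc t) = A *\<^sub>v x t + B *\<^sub>v u t"
    and \<xi>: "\<xi> \<in> carrier_vec n"
  shows "\<xi> \<bullet> x (j + i) = dual_orbit A i \<xi> \<bullet> x j +
           (\<Sum>s<i. \<Sum>q<m. (B\<^sup>T *\<^sub>v dual_orbit A (i - 1 - s) \<xi>) $ q * u (j + s) $ q)"
  using \<xi>
proof (induction i arbitrary: \<xi>)
  case (Suc i)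
  have A\<xi>: "A\<^sup>T *\<^sub>v \<xi> \<in> carrier_vec n" using A Suc.prems by simp
  have "\<xi> \<bullet> x (j + Suc i) = (A\<^sup>T *\<^sub>v \<xi>) \<bullet> x (j+i) + (B\<^sup>T *\<^sub>v \<xi>) \<bullet> u (j+i)"
    using dyn[of "j+i"] A B xs us Suc.prems
    by (simp add: scalar_prod_add_distrib[of _ n] transpose_vec_mult_scalar)
  also have "(B\<^sup>T *\<^sub>v \<xi>) \<bullet> u (j+i) = (\<Sum>q<m. (B\<^sup>T *\<^sub>v dual_orbit A (Suc i - 1 - i) \<xi>) $ q * u (j + i) $ q)"
    using us by (simp add: scalar_prod_sum)
  also have "(A\<^sup>T *\<^sub>v \<xi>) \<bullet> x (j+i) = dual_orbit A (Suc i) \<xi> \<bullet> x j +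
           (\<Sum>s<i. \<Sum>q<m. (B\<^sup>T *\<^sub>v dual_orbit A (Suc i - 1 - s) \<xi>) $ q * u (j + s) $ q)"
  proof -
    have "dual_orbit A (i - 1 - s) (A\<^sup>T *\<^sub>v \<xi>) = dual_orbit A (Suc i - 1 - s) \<xi>" if "s < i" for s
      using that by (simp add: dual_orbit_Suc_right Suc_diff_Suc)
    then show ?thesis
      using Suc.IH[OF A\<xi>] by (simp add: dual_orbit_Suc_right)
  qed
  finally show ?case by simp
qed simp

lemma dual_orbit_relation_shift:
  assumes A: "A \<in> carrier_mat n n" and \<xi>: "\<xi> \<in> carrier_vec n"
    and rel: "\<And>k. k < n \<Longrightarrow> (\<Sum>i\<le>d. \<alpha> i * dual_orbit A i \<xi> $ k) = 0"
    and k: "k < n"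
  shows "(\<Sum>i\<le>d. \<alpha> i * dual_orbit A (i + t) \<xi> $ k) = 0"
  using k
proof (induction t arbitrary: k)
  case (Suc t)
  have orbit: "dual_orbit A (i + Suc t) \<xi> $ k = (\<Sum>k'<n. A $$ (k',k) * dual_orbit A (i+t) \<xi> $ k')" for i
    using Suc.prems A mult_mat_vec_index_sum[of "A\<^sup>T" n n "dual_orbit A (i+t) \<xi>" k]
      dual_orbit_carrier[OF A \<xi>] by (simp add: dual_orbit_Suc)
  have "(\<Sum>i\<le>d. \<alpha> i * dual_orbit A (i + Suc t) \<xi> $ k) =
        (\<Sum>k'<n. A $$ (k',k) * (\<Sum>i\<le>d. \<alpha> i * dual_orbit A (i+t) \<xi> $ k'))"
    unfolding orbit by (simp add: sum_distrib_left mult_ac sum.swap[of _ "{..d}"])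
  then show ?case using Suc.IH by simp
qed (use rel in simp)

text \<open>Stands in for the Cayley-Hamilton theorem: the n + 1 vectors (A^T)^i \<xi>, i \<le> n, are
  linearly dependent.\<close>

lemma dual_orbit_annihilator:
  assumes A: "A \<in> carrier_mat n n" and \<xi>: "\<xi> \<in> carrier_vec n"
  shows "\<exists>\<alpha> d. d \<le> n \<and> \<alpha> d \<noteq> (0::real) \<and>
    (\<forall>t. \<forall>k<n. (\<Sum>i\<le>d. \<alpha> i * dual_orbit A (i+t) \<xi> $ k) = 0)"
proof -
  define W where "W = mat (Suc n) n (\<lambda>(i,k). dual_orbit A i \<xi> $ k)"
  have W: "W \<in> carrier_mat (Suc n) n" unfolding W_def by simp
  have "vec_space.rank (Suc n) W \<noteq> Suc n" using vec_space.rank_le_nc[OF W] by simp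
  then obtain z where z: "z \<in> carrier_vec (Suc n)" and z0: "z \<noteq> 0\<^sub>v (Suc n)"
    and zW: "\<forall>k<n. (\<Sum>i<Suc n. W $$ (i,k) * z $ i) = 0"
    using full_rank_iff_rows_indep[OF W] by blast
  define S where "S = {i. i \<le> n \<and> z $ i \<noteq> 0}"
  define d where "d = Max S"
  define \<alpha> where "\<alpha> i = (if i \<le> d then z $ i else 0)" for i
  obtain i0 where "i0 < Suc n" "z $ i0 \<noteq> 0"
    using z z0 by (metis eq_vecI carrier_vecD index_zero_vec)
  then have "i0 \<in> S" unfolding S_def by simp
  moreover have "finite S" unfolding S_def by simp
  ultimately have "d \<in> S" and above_d: "\<And>i. i \<in> S \<Longrightarrow> i \<le> d"
    unfolding d_def by (auto intro: Max_in)
  then have dn: "d \<le> n" and ad: "\<alpha> d \<noteq> 0" unfolding S_def \<alpha>_def by auto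
  have base: "(\<Sum>i\<le>d. \<alpha> i * dual_orbit A i \<xi> $ k) = 0" if k: "k < n" for k
  proof -
    have "(\<Sum>i\<le>d. \<alpha> i * dual_orbit A i \<xi> $ k) = (\<Sum>i<Suc n. W $$ (i,k) * z $ i)"
      unfolding lessThan_Suc_atMost
      by (rule sum.mono_neutral_cong_left) (use dn above_d k in \<open>auto simp: W_def \<alpha>_def S_def\<close>)
    then show ?thesis using zW k by simp
  qed
  have "(\<Sum>i\<le>d. \<alpha> i * dual_orbit A (i+t) \<xi> $ k) = 0" if "k < n" for t k
    by (rule dual_orbit_relation_shift[OF A \<xi> base that])
  then show ?thesis using dn ad by blast
qed

text \<open>The coefficients, on the window u(j), ..., u(j + N - 1), of the relation at time j + i
  with the state eliminated back to time j (lemma expanded_relation); combining them with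
  weights \<alpha> that annihilate the dual orbit eliminates the state altogether.\<close>

definition expanded_coeffs :: "nat \<Rightarrow> nat \<Rightarrow> (nat \<Rightarrow> nat \<Rightarrow> real) \<Rightarrow> (nat \<Rightarrow> nat \<Rightarrow> real) \<Rightarrow> nat \<Rightarrow> nat \<Rightarrow> real" where
  "expanded_coeffs i L \<beta> \<eta> r q =
     (if r < i then \<beta> (i - 1 - r) q else 0) + (if i \<le> r \<and> r < i + L then \<eta> (r - i) q else 0)"

definition combined_coeffs :: "(nat \<Rightarrow> real) \<Rightarrow> nat \<Rightarrow> nat \<Rightarrow> (nat \<Rightarrow> nat \<Rightarrow> real) \<Rightarrow> (nat \<Rightarrow> nat \<Rightarrow> real) \<Rightarrow> nat \<Rightarrow> nat \<Rightarrow> real" where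
  "combined_coeffs \<alpha> d L \<beta> \<eta> r q = (\<Sum>i\<le>d. \<alpha> i * expanded_coeffs i L \<beta> \<eta> r q)"

lemma expanded_relation:
  assumes A: "A \<in> carrier_mat n n" and B: "B \<in> carrier_mat n m"
    and xs: "\<And>t. x t \<in> carrier_vec n" and us: "\<And>t. u t \<in> carrier_vec m"
    and dyn: "\<And>t. x (Suc t) = A *\<^sub>v x t + B *\<^sub>v u t"
    and \<xi>: "\<xi> \<in> carrier_vec n" and \<beta>: "\<And>k q. \<beta> k q = (B\<^sup>T *\<^sub>v dual_orbit A k \<xi>) $ q"
    and rel: "\<And>j. j + L \<le> T \<Longrightarrow> \<xi> \<bullet> x j + (\<Sum>l<L. \<Sum>q<m. \<eta> l q * u (j+l) $ q) = 0"
    and iN: "i + L \<le> N" and jN: "j + N \<le> T"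
  shows "(\<Sum>r<N. \<Sum>q<m. expanded_coeffs i L \<beta> \<eta> r q * u (j + r) $ q) = - (dual_orbit A i \<xi> \<bullet> x j)"
proof -
  have "(\<Sum>r<N. \<Sum>q<m. expanded_coeffs i L \<beta> \<eta> r q * u (j + r) $ q)
      = (\<Sum>r<N. if r < i then (\<Sum>q<m. \<beta> (i-1-r) q * u (j + r) $ q) else 0)
        + (\<Sum>r<N. if i \<le> r \<and> r < i + L then (\<Sum>q<m. \<eta> (r-i) q * u (j + r) $ q) else 0)"
    unfolding sum.distrib[symmetric] expanded_coeffs_def
    by (intro sum.cong refl) (auto simp: distrib_right sum.distrib)
  also have "\<dots> = (\<Sum>s<i. \<Sum>q<m. \<beta> (i-1-s) q * u (j + s) $ q)
      + (\<Sum>l<L. \<Sum>q<m. \<eta> l q * u ((j + i) + l) $ q)"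
    using iN by (simp add: sum_lessThan_if_less sum_lessThan_if_window add.assoc)
  also have "(\<Sum>s<i. \<Sum>q<m. \<beta> (i-1-s) q * u (j + s) $ q) = \<xi> \<bullet> x (j + i) - dual_orbit A i \<xi> \<bullet> x j"
    using state_expansion[where x=x and u=u, OF A B xs us dyn \<xi>, of j i] unfolding \<beta> by simp
  also have "(\<Sum>l<L. \<Sum>q<m. \<eta> l q * u ((j + i) + l) $ q) = - (\<xi> \<bullet> x (j + i))"
    using rel[of "j + i"] iN jN by simp
  finally show ?thesis by simp
qed

lemma combined_relation:
  assumes A: "A \<in> carrier_mat n n" and B: "B \<in> carrier_mat n m"
    and xs: "\<And>t. x t \<in> carrier_vec n" and us: "\<And>t. u t \<in> carrier_vec m"
    and dyn: "\<And>t. x (Suc t) = A *\<^sub>v x t + B *\<^sub>v u t"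
    and \<xi>: "\<xi> \<in> carrier_vec n" and \<beta>: "\<And>k q. \<beta> k q = (B\<^sup>T *\<^sub>v dual_orbit A k \<xi>) $ q"
    and rel: "\<And>j. j + L \<le> T \<Longrightarrow> \<xi> \<bullet> x j + (\<Sum>l<L. \<Sum>q<m. \<eta> l q * u (j+l) $ q) = 0"
    and \<alpha>: "\<And>k. k < n \<Longrightarrow> (\<Sum>i\<le>d. \<alpha> i * dual_orbit A i \<xi> $ k) = 0"
    and dN: "d + L \<le> N" and jN: "j + N \<le> T"
  shows "(\<Sum>r<N. \<Sum>q<m. combined_coeffs \<alpha> d L \<beta> \<eta> r q * u (j + r) $ q) = 0"
proof -
  have "(\<Sum>r<N. \<Sum>q<m. combined_coeffs \<alpha> d L \<beta> \<eta> r q * u (j + r) $ q)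
      = (\<Sum>i\<le>d. \<alpha> i * (\<Sum>r<N. \<Sum>q<m. expanded_coeffs i L \<beta> \<eta> r q * u (j + r) $ q))"
    unfolding combined_coeffs_def sum_distrib_right sum_distrib_left
    by (simp add: mult.assoc sum.swap[of _ "{..<m}" "{..d}"] sum.swap[of _ "{..<N}" "{..d}"])
  also have "\<dots> = - (\<Sum>i\<le>d. \<alpha> i * (dual_orbit A i \<xi> \<bullet> x j))"
    using expanded_relation[OF A B xs us dyn \<xi> \<beta> rel _ jN] dN by (simp add: sum_negf)
  also have "\<dots> = - (\<Sum>k<n. x j $ k * (\<Sum>i\<le>d. \<alpha> i * dual_orbit A i \<xi> $ k))"
    by (simp add: scalar_prod_sum[OF xs] sum_distrib_left mult_ac sum.swap[of _ "{..d}"])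
  also have "\<dots> = 0" using \<alpha> by simp
  finally show ?thesis .
qed

text \<open>Back substitution: the coefficients at r = d + l and, for k < d, at r = d - 1 - k are
  triangular in the unknowns, with diagonal \<alpha> d.\<close>

lemma combined_coeffs_eq_0_imp_eta:
  assumes ad: "\<alpha> d \<noteq> 0"
    and comb0: "\<And>r q. r < d + L \<Longrightarrow> q < m \<Longrightarrow> combined_coeffs \<alpha> d L \<beta> \<eta> r q = 0"
  shows "\<forall>l<L. \<forall>q<m. \<eta> l q = 0"
proof (intro allI impI)
  fix l q assume "l < L" "q < m"
  then show "\<eta> l q = 0"
  proof (induction "L - l" arbitrary: l rule: less_induct)
    case less
    have "expanded_coeffs i L \<beta> \<eta> (d + l) q = 0" if "i < d" for i
    proof -
      have "\<eta> (d + l - i) q = 0" if "d + l < i + L"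
        using less.hyps[of "d + l - i"] \<open>i < d\<close> that less.prems by simp
      then show ?thesis using that unfolding expanded_coeffs_def by simp
    qed
    then have "combined_coeffs \<alpha> d L \<beta> \<eta> (d + l) q = \<alpha> d * \<eta> l q"
      unfolding combined_coeffs_def sum_atMost_split_last
      using less.prems by (simp add: expanded_coeffs_def)
    then show ?case using comb0[of "d + l" q] less.prems ad by simp
  qed
qed

lemma combined_coeffs_eq_0_imp_beta:
  assumes ad: "\<alpha> d \<noteq> 0"
    and comb0: "\<And>r q. r < d + L \<Longrightarrow> q < m \<Longrightarrow> combined_coeffs \<alpha> d L \<beta> \<eta> r q = 0"
    and \<alpha>: "\<And>t q. q < m \<Longrightarrow> (\<Sum>i\<le>d. \<alpha> i * \<beta> (i + t) q) = 0"
  shows "\<forall>k. \<forall>q<m. \<beta> k q = 0"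
proof (intro allI impI)
  have \<eta>0: "\<forall>l<L. \<forall>q<m. \<eta> l q = 0" using combined_coeffs_eq_0_imp_eta[OF ad comb0] .
  fix k q assume q: "q < m"
  then show "\<beta> k q = 0"
  proof (induction k rule: less_induct)
    case (less k)
    show ?case
    proof (cases "k < d")
      case True
      define r where "r = d - 1 - k"
      have "expanded_coeffs i L \<beta> \<eta> r q = 0" if i: "i < d" for i
      proof -
        have "\<beta> (i - 1 - r) q = 0" if "r < i"
          using less.IH[of "i - 1 - r"] less.prems that i unfolding r_def by simp
        moreover have "\<eta> (r - i) q = 0" if "i \<le> r" "r < i + L"
          using \<eta>0 less.prems that by simp
        ultimately show ?thesis unfolding expanded_coeffs_def by simp
      qed
      then have "combined_coeffs \<alpha> d L \<beta> \<eta> r q = \<alpha> d * expanded_coeffs d L \<beta> \<eta> r q"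
        unfolding combined_coeffs_def sum_atMost_split_last by simp
      also have "expanded_coeffs d L \<beta> \<eta> r q = \<beta> k q"
        using True unfolding expanded_coeffs_def r_def by auto
      finally show ?thesis using comb0[of r q] True less.prems ad unfolding r_def by simp
    next
      case False
      txt \<open>Beyond the window, the dependence \<alpha> among the dual orbit takes over.\<close>
      have "0 = (\<Sum>i<d. \<alpha> i * \<beta> (i + (k - d)) q) + \<alpha> d * \<beta> k q"
        using \<alpha>[OF less.prems, of "k - d"] False by (simp add: sum_atMost_split_last)
      also have "(\<Sum>i<d. \<alpha> i * \<beta> (i + (k - d)) q) = 0"
        using less.IH less.prems False by (intro sum.neutral) simp
      finally show ?thesis using ad by simp
    qed
  qed
qed

text \<open>Persistency of excitation makes the combined
  coefficients vanish; back substitution gives \<eta> = 0 and B^T (A^T)^k \<xi> = 0 for all k, and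
  controllability then gives \<xi> = 0.\<close>

lemma state_input_relation_trivial:
  assumes A: "A \<in> carrier_mat n n" and B: "B \<in> carrier_mat n m"
    and ctr: "controllable n m A B"
    and PE: "persistently_exciting m T (n + L) u"
    and xs: "\<And>t. x t \<in> carrier_vec n" and us: "\<And>t. u t \<in> carrier_vec m"
    and dyn: "\<And>t. x (Suc t) = A *\<^sub>v x t + B *\<^sub>v u t"
    and \<xi>: "\<xi> \<in> carrier_vec n"
    and rel: "\<And>j. j + L \<le> T \<Longrightarrow> \<xi> \<bullet> x j + (\<Sum>l<L. \<Sum>q<m. \<eta> l q * u (j+l) $ q) = 0"
  shows "\<xi> = 0\<^sub>v n" and "\<forall>l<L. \<forall>q<m. \<eta> l q = 0"
proof -
  obtain \<alpha> d where dn: "d \<le> n" and ad: "\<alpha> d \<noteq> 0"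
    and \<alpha>: "\<forall>t. \<forall>k<n. (\<Sum>i\<le>d. \<alpha> i * dual_orbit A (i+t) \<xi> $ k) = 0"
    using dual_orbit_annihilator[OF A \<xi>] by blast
  define \<beta> where "\<beta> k q = (B\<^sup>T *\<^sub>v dual_orbit A k \<xi>) $ q" for k q
  have \<alpha>\<beta>: "(\<Sum>i\<le>d. \<alpha> i * \<beta> (i+t) q) = 0" if q: "q < m" for t q
  proof -
    have \<beta>_sum: "\<beta> k q = (\<Sum>k'<n. B $$ (k',q) * dual_orbit A k \<xi> $ k')" for k
      unfolding \<beta>_def using q B mult_mat_vec_index_sum[of "B\<^sup>T" m n "dual_orbit A k \<xi>" q]
        dual_orbit_carrier[OF A \<xi>] by simp
    have "(\<Sum>i\<le>d. \<alpha> i * \<beta> (i+t) q) = (\<Sum>k'<n. B $$ (k',q) * (\<Sum>i\<le>d. \<alpha> i * dual_orbit A (i+t) \<xi> $ k'))"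
      by (simp add: \<beta>_sum sum_distrib_left mult_ac sum.swap[of _ "{..d}"])
    also have "\<dots> = 0" using \<alpha> by simp
    finally show ?thesis .
  qed
  have "(\<Sum>r<n + L. \<Sum>q<m. combined_coeffs \<alpha> d L \<beta> \<eta> r q * u (j + r) $ q) = 0"
    if "j + (n + L) \<le> T" for j
    by (rule combined_relation[where x=x and u=u, OF A B xs us dyn \<xi> \<beta>_def rel])
      (use spec[OF \<alpha>, of 0] dn that in simp_all)
  then have "\<forall>r<n + L. \<forall>q<m. combined_coeffs \<alpha> d L \<beta> \<eta> r q = 0"
    by (intro persistently_exciting_windows_indep[OF PE]) blast
  then have coeffs0: "combined_coeffs \<alpha> d L \<beta> \<eta> r q = 0" if "r < d + L" "q < m" for r q
    using that dn by simp
  show "\<forall>l<L. \<forall>q<m. \<eta> l q = 0" by (rule combined_coeffs_eq_0_imp_eta[OF ad coeffs0])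
  show "\<xi> = 0\<^sub>v n"
    using ctr \<xi> combined_coeffs_eq_0_imp_beta[OF ad coeffs0 \<alpha>\<beta>] unfolding controllable_iff_dual_orbit[OF A B] \<beta>_def by blast
qed

lemma behaviorI:
  assumes "\<And>t. x t \<in> carrier_vec n" and "\<And>t. x (Suc t) = A *\<^sub>v x t + B *\<^sub>v u t"
    and "\<And>t. y t = C *\<^sub>v x t + D *\<^sub>v u t"
    and "\<And>t. u t \<in> carrier_vec m" and "\<And>t. y t \<in> carrier_vec p"
  shows "(u, y) \<in> behavior n m p A B C D"
  unfolding behavior_def using assms by blast

lemma behaviorE:
  assumes "(u, y) \<in> behavior n m p A B C D"
  obtains x where "\<And>t. x t \<in> carrier_vec n" and "\<And>t. x (Suc t) = A *\<^sub>v x t + B *\<^sub>v u t"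
    and "\<And>t. y t = C *\<^sub>v x t + D *\<^sub>v u t"
    and "\<And>t. u t \<in> carrier_vec m" and "\<And>t. y t \<in> carrier_vec p"
proof -
  obtain x where "\<forall>t. x t \<in> carrier_vec n \<and> x (Suc t) = A *\<^sub>v x t + B *\<^sub>v u t \<and> y t = C *\<^sub>v x t + D *\<^sub>v u t"
    using assms unfolding behavior_def by auto
  then show ?thesis using assms by (intro that[of x]) (auto simp: behavior_def)
qed

lemma stack_eqD:
  assumes eq: "stack q k v = stack q k w" and t: "t < k"
    and "v t \<in> carrier_vec q" and "w t \<in> carrier_vec q"
  shows "v t = w t"
proof (rule eq_vecI)
  fix c assume "c < dim_vec (w t)"
  then have "c < q" using assms by simp
  then show "v t $ c = w t $ c"
    using arg_cong[OF eq, of "\<lambda>s. s $ (t * q + c)"] t by (simp add: stack_index_block)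
qed (use assms in simp)

lemma restricted_behaviorE:
  assumes rb: "stack m k u @\<^sub>v stack p k y \<in> restricted_behavior n m p k A B C D"
    and u: "\<forall>t<k. u t \<in> carrier_vec m" and y: "\<forall>t<k. y t \<in> carrier_vec p"
  obtains u' y' where "(u', y') \<in> behavior n m p A B C D" "\<forall>t<k. u' t = u t" "\<forall>t<k. y' t = y t"
proof -
  obtain u' y' where eq: "stack m k u @\<^sub>v stack p k y = stack m k u' @\<^sub>v stack p k y'"
    and bh: "(u', y') \<in> behavior n m p A B C D"
    using rb unfolding restricted_behavior_def by blast
  have "stack m k u' = stack m k u" and "stack p k y' = stack p k y"
    using eq append_vec_eq[of "stack m k u" "m * k" "stack m k u'"] by simp_all
  moreover have "\<forall>t. u' t \<in> carrier_vec m \<and> y' t \<in> carrier_vec p"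
    using bh unfolding behavior_def by simp
  ultimately show ?thesis using that bh u y stack_eqD by metis
qed

definition shift_comb :: "nat \<Rightarrow> real vec \<Rightarrow> (nat \<Rightarrow> real vec) \<Rightarrow> nat \<Rightarrow> real vec" where
  "shift_comb k c w t = vec k (\<lambda>q. \<Sum>j<dim_vec c. c $ j * w (t + j) $ q)"

lemma shift_comb_carrier[simp]: "shift_comb k c w t \<in> carrier_vec k"
  unfolding shift_comb_def by simp

lemma shift_comb_dim[simp]: "dim_vec (shift_comb k c w t) = k"
  unfolding shift_comb_def by simp

lemma shift_comb_index: "q < k \<Longrightarrow> shift_comb k c w t $ q = (\<Sum>j<dim_vec c. c $ j * w (t + j) $ q)"
  unfolding shift_comb_def by simp

lemma shift_comb_Suc: "shift_comb k c w (Suc t) = shift_comb k c (\<lambda>s. w (Suc s)) t"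
  unfolding shift_comb_def by simp

lemma shift_comb_mult_mat:
  assumes M: "M \<in> carrier_mat r k" and w: "\<And>t. w t \<in> carrier_vec k"
  shows "shift_comb r c (\<lambda>t. M *\<^sub>v w t) t = M *\<^sub>v shift_comb k c w t"
proof (rule eq_vecI)
  fix i assume "i < dim_vec (M *\<^sub>v shift_comb k c w t)"
  then have i: "i < r" using M by simp
  have "shift_comb r c (\<lambda>t. M *\<^sub>v w t) t $ i = (\<Sum>j<dim_vec c. c $ j * (\<Sum>l<k. M $$ (i,l) * w (t+j) $ l))"
    using i mult_mat_vec_index_sum[OF M w i] by (simp add: shift_comb_index)
  also have "\<dots> = (\<Sum>l<k. M $$ (i,l) * (\<Sum>j<dim_vec c. c $ j * w (t+j) $ l))"
    by (simp add: sum_distrib_left mult_ac sum.swap[of _ "{..<dim_vec c}" "{..<k}"])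
  also have "\<dots> = (M *\<^sub>v shift_comb k c w t) $ i"
    using mult_mat_vec_index_sum[OF M shift_comb_carrier i, of c w t] by (simp add: shift_comb_index)
  finally show "shift_comb r c (\<lambda>t. M *\<^sub>v w t) t $ i = (M *\<^sub>v shift_comb k c w t) $ i" .
qed (use M in simp)

lemma shift_comb_add:
  assumes v: "\<And>t. v t \<in> carrier_vec k" and w: "\<And>t. w t \<in> carrier_vec k"
  shows "shift_comb k c (\<lambda>t. v t + w t) t = shift_comb k c v t + shift_comb k c w t"
proof (rule eq_vecI)
  fix i assume "i < dim_vec (shift_comb k c v t + shift_comb k c w t)"
  then have i: "i < k" by simp
  have "\<And>s. (v s + w s) $ i = v s $ i + w s $ i" using v w i by (metis carrier_vecD index_add_vec(1))
  then show "shift_comb k c (\<lambda>t. v t + w t) t $ i = (shift_comb k c v t + shift_comb k c w t) $ i"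
    using i by (simp add: shift_comb_index sum.distrib distrib_left)
qed simp

lemma shift_comb_trajectory:
  assumes "A \<in> carrier_mat n n" "B \<in> carrier_mat n m" "C \<in> carrier_mat p n" "D \<in> carrier_mat p m"
    and xs: "\<And>t. x t \<in> carrier_vec n" and us: "\<And>t. u t \<in> carrier_vec m"
    and dyn: "\<And>t. x (Suc t) = A *\<^sub>v x t + B *\<^sub>v u t"
    and out: "\<And>t. y t = C *\<^sub>v x t + D *\<^sub>v u t"
  shows "shift_comb n c x (Suc t) = A *\<^sub>v shift_comb n c x t + B *\<^sub>v shift_comb m c u t"
    and "shift_comb p c y t = C *\<^sub>v shift_comb n c x t + D *\<^sub>v shift_comb m c u t"
proof -
  have "shift_comb n c x (Suc t) = shift_comb n c (\<lambda>s. A *\<^sub>v x s + B *\<^sub>v u s) t"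
    unfolding shift_comb_Suc dyn ..
  also have "\<dots> = A *\<^sub>v shift_comb n c x t + B *\<^sub>v shift_comb m c u t"
    using assms by (simp add: shift_comb_add shift_comb_mult_mat)
  finally show "shift_comb n c x (Suc t) = A *\<^sub>v shift_comb n c x t + B *\<^sub>v shift_comb m c u t" .
  have "y = (\<lambda>s. C *\<^sub>v x s + D *\<^sub>v u s)" using out by auto
  then show "shift_comb p c y t = C *\<^sub>v shift_comb n c x t + D *\<^sub>v shift_comb m c u t"
    using assms by (simp add: shift_comb_add shift_comb_mult_mat)
qed

lemma hankel_mult_vec:
  assumes c: "c \<in> carrier_vec (T - L + 1)"
  shows "hankel m L T u *\<^sub>v c = stack m L (shift_comb m c u)"
proof (rule eq_vecI)
  fix i assume "i < dim_vec (stack m L (shift_comb m c u))"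
  then have i: "i < m * L" by simp
  then have "i mod m < m" by (cases m) auto
  then show "(hankel m L T u *\<^sub>v c) $ i = stack m L (shift_comb m c u) $ i"
    using mult_mat_vec_index_sum[OF hankel_carrier c i] i c
    by (auto simp: stack_index shift_comb_index hankel_index mult.commute intro: sum.cong)
qed simp

definition state_matrix :: "nat \<Rightarrow> nat \<Rightarrow> (nat \<Rightarrow> real vec) \<Rightarrow> real mat" where
  "state_matrix n k x = mat n k (\<lambda>(i, j). x j $ i)"

lemma state_matrix_carrier[simp]: "state_matrix n k x \<in> carrier_mat n k"
  unfolding state_matrix_def by simp

lemma state_matrix_mult_vec:
  assumes c: "c \<in> carrier_vec k"
  shows "state_matrix n k x *\<^sub>v c = shift_comb n c x 0"
proof (rule eq_vecI)
  fix i assume "i < dim_vec (shift_comb n c x 0)"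
  then have i: "i < n" by simp
  show "(state_matrix n k x *\<^sub>v c) $ i = shift_comb n c x 0 $ i"
    unfolding mult_mat_vec_index_sum[OF state_matrix_carrier c i] shift_comb_index[OF i]
    using i c by (auto simp: state_matrix_def mult.commute intro: sum.cong)
qed (simp add: state_matrix_def)

lemma trajectory_outputs_eq:
  assumes dyn1: "\<And>t. x1 (Suc t) = A *\<^sub>v x1 t + B *\<^sub>v u1 t" and out1: "\<And>t. y1 t = C *\<^sub>v x1 t + D *\<^sub>v u1 t"
    and dyn2: "\<And>t. x2 (Suc t) = A *\<^sub>v x2 t + B *\<^sub>v u2 t" and out2: "\<And>t. y2 t = C *\<^sub>v x2 t + D *\<^sub>v u2 t"
    and x0: "x1 0 = x2 0" and u: "\<And>t. t < L \<Longrightarrow> u1 t = u2 t"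
    and t: "t < L"
  shows "y1 t = y2 t"
proof -
  have "x1 t = x2 t" using t
  proof (induction t)
    case (Suc t)
    then show ?case using dyn1[of t] dyn2[of t] u[of t] by simp
  qed (rule x0)
  then show ?thesis using out1 out2 u[OF t] by simp
qed

lemma hankel_data_image:
  "mat_image (hankel m L T u @\<^sub>r hankel p L T y) =
    {stack m L (shift_comb m c u) @\<^sub>v stack p L (shift_comb p c y) | c. c \<in> carrier_vec (T - L + 1)}"
proof -
  have dim: "dim_col (hankel m L T u @\<^sub>r hankel p L T y) = T - L + 1"
    by (simp add: append_rows_def)
  have "(hankel m L T u @\<^sub>r hankel p L T y) *\<^sub>v c =
      stack m L (shift_comb m c u) @\<^sub>v stack p L (shift_comb p c y)" if "c \<in> carrier_vec (T - L + 1)" for c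
    unfolding mat_mult_append[OF hankel_carrier hankel_carrier that] hankel_mult_vec[OF that] ..
  then show ?thesis unfolding mat_image_def dim Setcompr_eq_image by (rule image_cong[OF refl])
qed

lemma hankel_image_subset_restricted_behavior:
  assumes bh: "(u, y) \<in> behavior n m p A B C D"
    and "A \<in> carrier_mat n n" "B \<in> carrier_mat n m" "C \<in> carrier_mat p n" "D \<in> carrier_mat p m"
  shows "mat_image (hankel m L T u @\<^sub>r hankel p L T y) \<subseteq> restricted_behavior n m p L A B C D"
proof
  fix w assume "w \<in> mat_image (hankel m L T u @\<^sub>r hankel p L T y)"
  then obtain c where w: "w = stack m L (shift_comb m c u) @\<^sub>v stack p L (shift_comb p c y)"
    unfolding hankel_data_image Setcompr_eq_image by (rule imageE)
  obtain x where "\<And>t. x t \<in> carrier_vec n" "\<And>t. x (Suc t) = A *\<^sub>v x t + B *\<^sub>v u t"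
    "\<And>t. y t = C *\<^sub>v x t + D *\<^sub>v u t" "\<And>t. u t \<in> carrier_vec m" "\<And>t. y t \<in> carrier_vec p"
    using behaviorE[OF bh] by metis
  then have "(shift_comb m c u, shift_comb p c y) \<in> behavior n m p A B C D"
    using shift_comb_trajectory[where x=x and u=u and y=y] assms
    by (intro behaviorI[where x="shift_comb n c x"]) simp_all
  then show "w \<in> restricted_behavior n m p L A B C D"
    unfolding restricted_behavior_def w by blast
qed

lemma state_hankel_mult_vec:
  assumes c: "c \<in> carrier_vec (T - L + 1)"
  shows "(state_matrix n (T - L + 1) x @\<^sub>r hankel m L T u) *\<^sub>v c =
    shift_comb n c x 0 @\<^sub>v stack m L (shift_comb m c u)"
  unfolding mat_mult_append[OF state_matrix_carrier hankel_carrier c]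
    state_matrix_mult_vec[OF c] hankel_mult_vec[OF c] ..

lemma state_hankel_rows_comb:
  assumes xs: "\<And>t. x t \<in> carrier_vec n" and j: "j < T - L + 1"
  shows "(\<Sum>i<n + m * L. (state_matrix n (T - L + 1) x @\<^sub>r hankel m L T u) $$ (i, j) * z $ i)
    = vec n (\<lambda>i. z $ i) \<bullet> x j + (\<Sum>l<L. \<Sum>q<m. z $ (n + (l * m + q)) * u (j + l) $ q)"
proof -
  let ?K = "state_matrix n (T - L + 1) x @\<^sub>r hankel m L T u"
  have "(\<Sum>i<n + m * L. ?K $$ (i,j) * z $ i)
      = (\<Sum>i<n. ?K $$ (i,j) * z $ i) + (\<Sum>i<m * L. ?K $$ (n + i, j) * z $ (n + i))"
    by (rule sum_lessThan_add)
  also have "(\<Sum>i<n. ?K $$ (i,j) * z $ i) = vec n (\<lambda>i. z $ i) \<bullet> x j"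
    unfolding scalar_prod_sum[OF xs]
  proof (intro sum.cong refl)
    fix i assume "i \<in> {..<n}"
    then show "?K $$ (i,j) * z $ i = vec n (\<lambda>i. z $ i) $ i * x j $ i"
      using append_rows_index[OF state_matrix_carrier hankel_carrier, of i n m L j T x u] j
      by (simp add: state_matrix_def)
  qed
  also have "(\<Sum>i<m * L. ?K $$ (n + i, j) * z $ (n + i))
      = (\<Sum>i<m * L. hankel m L T u $$ (i,j) * vec (m * L) (\<lambda>i. z $ (n + i)) $ i)"
  proof (intro sum.cong refl)
    fix i assume "i \<in> {..<m * L}"
    then show "?K $$ (n + i, j) * z $ (n + i) = hankel m L T u $$ (i,j) * vec (m * L) (\<lambda>i. z $ (n + i)) $ i"
      using append_rows_index[OF state_matrix_carrier hankel_carrier, of "n + i" n m L j T x u] j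
      by simp
  qed
  also have "\<dots> = (\<Sum>l<L. \<Sum>q<m. z $ (n + (l * m + q)) * u (j + l) $ q)"
    unfolding hankel_rows_comb[OF j] by (intro sum.cong refl) (simp add: block_index_less)
  finally show ?thesis .
qed

lemma state_hankel_rows_indep:
  assumes A: "A \<in> carrier_mat n n" and B: "B \<in> carrier_mat n m"
    and ctr: "controllable n m A B"
    and PE: "persistently_exciting m T (n + L) u"
    and xs: "\<And>t. x t \<in> carrier_vec n" and us: "\<And>t. u t \<in> carrier_vec m"
    and dyn: "\<And>t. x (Suc t) = A *\<^sub>v x t + B *\<^sub>v u t"
    and z: "z \<in> carrier_vec (n + m * L)"
    and comb: "\<forall>j<T - L + 1.
      (\<Sum>i<n + m * L. (state_matrix n (T - L + 1) x @\<^sub>r hankel m L T u) $$ (i, j) * z $ i) = 0"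
  shows "z = 0\<^sub>v (n + m * L)"
proof -
  define \<xi> where "\<xi> = vec n (\<lambda>i. z $ i)"
  define \<eta> where "\<eta> l q = z $ (n + (l * m + q))" for l q
  have \<xi>: "\<xi> \<in> carrier_vec n" unfolding \<xi>_def by simp
  have rel: "\<xi> \<bullet> x j + (\<Sum>l<L. \<Sum>q<m. \<eta> l q * u (j+l) $ q) = 0" if "j + L \<le> T" for j
  proof -
    have j: "j < T - L + 1" using that by simp
    show ?thesis
      using comb[rule_format, OF j] unfolding state_hankel_rows_comb[OF xs j] \<xi>_def \<eta>_def .
  qed
  note trivial = state_input_relation_trivial[where x=x and u=u, OF A B ctr PE xs us dyn \<xi> rel]
  have low: "z $ i = 0" if "i < n" for i
    using arg_cong[OF trivial(1), of "\<lambda>v. v $ i"] that by (simp add: \<xi>_def)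
  have tail: "vec (m * L) (\<lambda>i. z $ (n + i)) = 0\<^sub>v (m * L)"
  proof (rule zero_vec_if_blocks_zero)
    show "\<forall>r<L. \<forall>q<m. vec (m * L) (\<lambda>i. z $ (n + i)) $ (r * m + q) = 0"
      using trivial(2) block_index_less unfolding \<eta>_def by simp
  qed simp
  have high: "z $ (n + i) = 0" if "i < m * L" for i
    using arg_cong[OF tail, of "\<lambda>v. v $ i"] that by simp
  show ?thesis
  proof (rule eq_vecI)
    fix i assume "i < dim_vec (0\<^sub>v (n + m * L))"
    then show "z $ i = 0\<^sub>v (n + m * L) $ i"
      using low high[of "i - n"] by (cases "i < n") auto
  qed (use z in simp)
qed

lemma restricted_behavior_subset_hankel_image:
  assumes bh: "(u, y) \<in> behavior n m p A B C D"
    and A: "A \<in> carrier_mat n n" and B: "B \<in> carrier_mat n m"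
    and C: "C \<in> carrier_mat p n" and D: "D \<in> carrier_mat p m"
    and ctr: "controllable n m A B"
    and PE: "persistently_exciting m T (n + L) u"
  shows "restricted_behavior n m p L A B C D \<subseteq> mat_image (hankel m L T u @\<^sub>r hankel p L T y)"
proof
  obtain x where xs: "\<And>t. x t \<in> carrier_vec n" and dyn: "\<And>t. x (Suc t) = A *\<^sub>v x t + B *\<^sub>v u t"
    and out: "\<And>t. y t = C *\<^sub>v x t + D *\<^sub>v u t" and us: "\<And>t. u t \<in> carrier_vec m"
    and "\<And>t. y t \<in> carrier_vec p"
    using behaviorE[OF bh] by metis
  fix w assume "w \<in> restricted_behavior n m p L A B C D"
  then obtain u2 y2 where w: "w = stack m L u2 @\<^sub>v stack p L y2"
    and bh2: "(u2, y2) \<in> behavior n m p A B C D"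
    unfolding restricted_behavior_def by blast
  obtain x2 where x2s: "\<And>t. x2 t \<in> carrier_vec n" and dyn2: "\<And>t. x2 (Suc t) = A *\<^sub>v x2 t + B *\<^sub>v u2 t"
    and out2: "\<And>t. y2 t = C *\<^sub>v x2 t + D *\<^sub>v u2 t" and u2s: "\<And>t. u2 t \<in> carrier_vec m"
    and y2s: "\<And>t. y2 t \<in> carrier_vec p"
    using behaviorE[OF bh2] by metis
  let ?K = "state_matrix n (T - L + 1) x @\<^sub>r hankel m L T u"
  have K: "?K \<in> carrier_mat (n + m * L) (T - L + 1)"
    by (rule carrier_append_rows[OF state_matrix_carrier hankel_carrier])
  txt \<open>Since the data matrix has full row rank, the initial state and the inputs of the given
    trajectory are reproduced by a combination of the columns of the data.\<close>
  have "x2 0 @\<^sub>v stack m L u2 \<in> carrier_vec (n + m * L)" using x2s by simp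
  then obtain c where c: "c \<in> carrier_vec (T - L + 1)" and Kc: "?K *\<^sub>v c = x2 0 @\<^sub>v stack m L u2"
    using surj_if_rows_indep[OF K state_hankel_rows_indep[where x=x and u=u, OF A B ctr PE xs us dyn]]
    by blast
  have "shift_comb n c x 0 = x2 0 \<and> stack m L (shift_comb m c u) = stack m L u2"
    using Kc unfolding state_hankel_mult_vec[OF c] append_vec_eq[OF shift_comb_carrier x2s] .
  then have x0: "shift_comb n c x 0 = x2 0" and ustack: "stack m L (shift_comb m c u) = stack m L u2"
    by simp_all
  have ueq: "shift_comb m c u t = u2 t" if "t < L" for t
    using stack_eqD[OF ustack that shift_comb_carrier u2s] .
  have yeq: "shift_comb p c y t = y2 t" if "t < L" for t
    by (rule trajectory_outputs_eq[OF shift_comb_trajectory[where x=x and u=u and y=y, OF A B C D xs us dyn out]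
          dyn2 out2 x0 ueq that])
  have "stack p L y2 = stack p L (shift_comb p c y)" by (rule stack_cong) (simp add: yeq)
  then have "w = stack m L (shift_comb m c u) @\<^sub>v stack p L (shift_comb p c y)"
    unfolding w ustack by simp
  then show "w \<in> mat_image (hankel m L T u @\<^sub>r hankel p L T y)"
    unfolding hankel_data_image Setcompr_eq_image using c by (rule image_eqI)
qed

lemma universal_if_persistently_exciting:
  assumes PE: "persistently_exciting m T (n + L) u" and LT: "L \<le> T"
    and us: "\<forall>t<T. u t \<in> carrier_vec m"
  shows "universal n m p T L u"
  unfolding universal_def
proof (intro allI impI)
  fix A B C D and y :: "nat \<Rightarrow> real vec"
  assume "(A, B, C, D) \<in> M_cont n m p" and ys: "\<forall>t<T. y t \<in> carrier_vec p"
    and data: "stack m T u @\<^sub>v stack p T y \<in> restricted_behavior n m p T A B C D"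
  then have A: "A \<in> carrier_mat n n" and B: "B \<in> carrier_mat n m" and C: "C \<in> carrier_mat p n"
    and D: "D \<in> carrier_mat p m" and ctr: "controllable n m A B"
    unfolding M_cont_def by auto
  obtain u' y' where bh: "(u', y') \<in> behavior n m p A B C D"
    and "\<forall>t<T. u' t = u t" and "\<forall>t<T. y' t = y t"
    using restricted_behaviorE[OF data us ys] by blast
  then have PE': "persistently_exciting m T (n + L) u'"
    using PE persistently_exciting_cong[of T u' u] by simp
  have "hankel m L T u' = hankel m L T u" and "hankel p L T y' = hankel p L T y"
    using hankel_cong[OF LT] \<open>\<forall>t<T. u' t = u t\<close> \<open>\<forall>t<T. y' t = y t\<close> by blast+
  then show "restricted_behavior n m p L A B C D = mat_image (hankel m L T u @\<^sub>r hankel p L T y)"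
    using hankel_image_subset_restricted_behavior[OF bh A B C D]
      restricted_behavior_subset_hankel_image[OF bh A B C D ctr PE']
    by (metis subset_antisym)
qed

lemma not_persistently_exciting_obtain:
  assumes nPE: "\<not> persistently_exciting m T N u" and N: "N \<ge> 1" and m: "m \<ge> 1"
  obtains g :: "nat \<Rightarrow> nat \<Rightarrow> real" where "\<exists>r<N. \<exists>q<m. g r q \<noteq> 0"
    and "\<forall>j. j + N \<le> T \<longrightarrow> (\<Sum>r<N. \<Sum>q<m. g r q * u (j+r) $ q) = 0"
proof (cases "N \<le> T")
  case True
  then show ?thesis using nPE that unfolding persistently_exciting_iff[OF True] by blast
next
  case False
  define g :: "nat \<Rightarrow> nat \<Rightarrow> real" where "g r q = (if r = 0 \<and> q = 0 then 1 else 0)" for r q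
  have "\<exists>r<N. \<exists>q<m. g r q \<noteq> 0" using N m unfolding g_def by (intro exI[of _ 0]) auto
  moreover have "\<forall>j. j + N \<le> T \<longrightarrow> (\<Sum>r<N. \<Sum>q<m. g r q * u (j+r) $ q) = 0" using False by auto
  ultimately show ?thesis using that by blast
qed

definition window_poly :: "(nat \<Rightarrow> nat \<Rightarrow> real) \<Rightarrow> nat \<Rightarrow> nat \<Rightarrow> real poly" where
  "window_poly g N q = (\<Sum>r<N. monom (g r q) r)"

lemma coeff_window_poly: "coeff (window_poly g N q) i = (if i < N then g i q else 0)"
  unfolding window_poly_def coeff_sum
  by (simp add: coeff_monom sum.delta[of "{..<N}" i "\<lambda>_. g i q"] if_distrib cong: if_cong)

lemma degree_window_poly:
  assumes "N \<ge> 1"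
  shows "degree (window_poly g N q) < N"
proof -
  have "degree (window_poly g N q) \<le> N - 1"
    by (rule degree_le) (use assms in \<open>auto simp: coeff_window_poly\<close>)
  then show ?thesis using assms by simp
qed

lemma window_poly_non_root:
  assumes "\<exists>r<N. \<exists>q<m. g r q \<noteq> 0"
  obtains \<mu> q0 where "q0 < m" "poly (window_poly g N q0) \<mu> \<noteq> 0"
proof -
  obtain r q0 where r: "r < N" and q0: "q0 < m" and g: "g r q0 \<noteq> 0" using assms by blast
  then have "coeff (window_poly g N q0) r \<noteq> 0" by (simp add: coeff_window_poly)
  then have "window_poly g N q0 \<noteq> 0" by auto
  then have "finite {x. poly (window_poly g N q0) x = 0}" by (rule poly_roots_finite)
  then obtain \<mu> where "\<mu> \<notin> {x. poly (window_poly g N q0) x = 0}"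
    using ex_new_if_finite[OF infinite_UNIV_char_0] by blast
  then show ?thesis using that q0 by auto
qed

definition poly_window :: "nat \<Rightarrow> real poly \<Rightarrow> (nat \<Rightarrow> real) \<Rightarrow> nat \<Rightarrow> real" where
  "poly_window K P w j = (\<Sum>i<K. coeff P i * w (j + i))"

lemma poly_window_add: "poly_window K (P + Q) w j = poly_window K P w j + poly_window K Q w j"
  unfolding poly_window_def by (simp add: distrib_right sum.distrib)

lemma poly_window_const:
  assumes "K \<ge> 1"
  shows "poly_window K [:c:] w j = c * w j"
proof -
  have "poly_window K [:c:] w j = (\<Sum>i<K. if i = 0 then c * w j else 0)"
    unfolding poly_window_def by (intro sum.cong refl) (auto simp: coeff_pCons split: nat.splits)
  also have "\<dots> = c * w j" using assms by (simp add: sum.delta)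
  finally show ?thesis .
qed

lemma poly_window_linear_factor:
  assumes deg: "degree P + 1 < K"
  shows "poly_window K ([:-\<mu>, 1:] * P) w j = poly_window K P w (Suc j) - \<mu> * poly_window K P w j"
proof -
  obtain K' where K': "K = Suc K'" using deg by (cases K) auto
  have "poly_window K (pCons 0 P) w j = (\<Sum>i<K'. coeff P i * w (j + Suc i))"
    unfolding poly_window_def K' sum.lessThan_Suc_shift by simp
  also have "\<dots> = poly_window K P w (Suc j)"
  proof -
    have "coeff P K' = 0" using deg K' by (intro coeff_eq_0) simp
    then show ?thesis unfolding poly_window_def K' by simp
  qed
  finally have "poly_window K (pCons 0 P) w j = poly_window K P w (Suc j)" .
  moreover have "poly_window K (Polynomial.smult (-\<mu>) P) w j = - \<mu> * poly_window K P w j"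
    unfolding poly_window_def by (simp add: sum_distrib_left mult_ac sum_negf)
  moreover have "[:-\<mu>, 1:] * P = Polynomial.smult (-\<mu>) P + pCons 0 P" by (simp add: mult_pCons_left)
  ultimately show ?thesis by (simp only: poly_window_add)
qed

lemma poly_window_lessThan:
  assumes "degree P < L" "L \<le> K"
  shows "poly_window K P w j = (\<Sum>l<L. coeff P l * w (j + l))"
  unfolding poly_window_def
  by (rule sum.mono_neutral_right) (use assms in \<open>auto intro: coeff_eq_0\<close>)

definition synthetic_div_iter :: "real \<Rightarrow> real poly \<Rightarrow> nat \<Rightarrow> real poly" where
  "synthetic_div_iter \<mu> G k = ((\<lambda>P. synthetic_div P \<mu>) ^^ k) G"

lemma synthetic_div_iter_0[simp]: "synthetic_div_iter \<mu> G 0 = G"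
  unfolding synthetic_div_iter_def by simp

lemma synthetic_div_iter_Suc:
  "synthetic_div_iter \<mu> G (Suc k) = synthetic_div (synthetic_div_iter \<mu> G k) \<mu>"
  unfolding synthetic_div_iter_def by simp

lemma degree_synthetic_div_iter: "degree (synthetic_div_iter \<mu> G k) = degree G - k"
  by (induction k) (auto simp: synthetic_div_iter_Suc degree_synthetic_div)

lemma poly_window_synthetic_div_iter:
  fixes \<mu> :: real and G :: "real poly"
  assumes deg: "degree G < K" and k: "Suc k < K"
  defines "Q \<equiv> synthetic_div_iter \<mu> G"
  shows "poly_window K (Q k) w j =
    poly_window K (Q (Suc k)) w (Suc j) - \<mu> * poly_window K (Q (Suc k)) w j + poly (Q k) \<mu> * w j"
proof -
  define R where "R = poly (Q k) \<mu>"
  have QR: "Q k = [:-\<mu>, 1:] * Q (Suc k) + [:R:]"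
    unfolding Q_def R_def synthetic_div_iter_Suc by (rule synthetic_div_correct'[symmetric])
  have "poly_window K (Q k) w j = poly_window K ([:-\<mu>, 1:] * Q (Suc k)) w j + poly_window K [:R:] w j"
    unfolding QR by (rule poly_window_add)
  also have "poly_window K [:R:] w j = R * w j" using k by (simp add: poly_window_const)
  also have "poly_window K ([:-\<mu>, 1:] * Q (Suc k)) w j
      = poly_window K (Q (Suc k)) w (Suc j) - \<mu> * poly_window K (Q (Suc k)) w j"
    by (rule poly_window_linear_factor) (use deg k in \<open>simp add: Q_def degree_synthetic_div_iter\<close>)
  finally show ?thesis unfolding R_def .
qed

lemma jordan_block_mult_vec_index:
  fixes \<mu> :: real
  assumes v: "v \<in> carrier_vec n" and r: "r < n"
  shows "(jordan_block n \<mu> *\<^sub>v v) $ r = \<mu> * v $ r + (if Suc r < n then v $ Suc r else 0)"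
proof -
  have "(jordan_block n \<mu> *\<^sub>v v) $ r = (\<Sum>k<n. (if k = r then \<mu> * v $ k else 0) + (if k = Suc r then v $ k else 0))"
    unfolding mult_mat_vec_index_sum[OF jordan_block_carrier v r] using r by (intro sum.cong refl) auto
  also have "\<dots> = \<mu> * v $ r + (if Suc r < n then v $ Suc r else 0)"
    using r by (simp add: sum.distrib sum.delta)
  finally show ?thesis .
qed

lemma transpose_jordan_block_mult_vec_index:
  fixes \<mu> :: real
  assumes v: "v \<in> carrier_vec n" and i: "i < n"
  shows "((jordan_block n \<mu>)\<^sup>T *\<^sub>v v) $ i = \<mu> * v $ i + (if 1 \<le> i then v $ (i - 1) else 0)"
proof -
  have "((jordan_block n \<mu>)\<^sup>T *\<^sub>v v) $ i = (\<Sum>k<n. (if k = i then \<mu> * v $ k else 0) + (if Suc k = i then v $ k else 0))"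
    unfolding mult_mat_vec_index_sum[of "(jordan_block n \<mu>)\<^sup>T" n n, OF _ v i, simplified]
    using i by (intro sum.cong refl) auto
  also have "(\<Sum>k<n. (if Suc k = i then v $ k else 0)) = (if 1 \<le> i then v $ (i - 1) else 0)"
    using i by (cases i) (auto simp: sum.delta cong: if_cong)
  then have "(\<Sum>k<n. (if k = i then \<mu> * v $ k else 0) + (if Suc k = i then v $ k else 0))
      = \<mu> * v $ i + (if 1 \<le> i then v $ (i - 1) else 0)"
    using i by (simp add: sum.distrib sum.delta)
  finally show ?thesis .
qed

text \<open>The recurrence is the one satisfied by the entries f l i of (J^T)^l \<xi> for a Jordan
  block J.\<close>

lemma jordan_shifted_pairings_vanish:
  fixes f :: "nat \<Rightarrow> nat \<Rightarrow> real" and b :: "nat \<Rightarrow> real"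
  assumes rec: "\<And>l i. i < n \<Longrightarrow> f (Suc l) i = \<mu> * f l i + (if 1 \<le> i then f l (i - 1) else 0)"
    and pair0: "\<And>l. l < n \<Longrightarrow> (\<Sum>r<n. b r * f l r) = 0"
    and kl: "k + l < n"
  shows "(\<Sum>r<n. b r * (if k \<le> r then f l (r - k) else 0)) = 0"
  using kl
proof (induction k arbitrary: l)
  case 0
  then show ?case using pair0[of l] by simp
next
  case (Suc k)
  define \<Phi> where "\<Phi> k l = (\<Sum>r<n. b r * (if k \<le> r then f l (r - k) else 0))" for k l
  have "\<Phi> k (Suc l) = (\<Sum>r<n. \<mu> * (b r * (if k \<le> r then f l (r - k) else 0))
                               + b r * (if Suc k \<le> r then f l (r - Suc k) else 0))"
    unfolding \<Phi>_def
  proof (intro sum.cong refl)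
    fix r assume "r \<in> {..<n}"
    then show "b r * (if k \<le> r then f (Suc l) (r - k) else 0) =
        \<mu> * (b r * (if k \<le> r then f l (r - k) else 0)) + b r * (if Suc k \<le> r then f l (r - Suc k) else 0)"
      using rec[of "r - k" l] by (cases "k \<le> r") (auto simp: algebra_simps Suc_diff_Suc)
  qed
  also have "\<dots> = \<mu> * \<Phi> k l + \<Phi> (Suc k) l"
    unfolding \<Phi>_def by (simp add: sum.distrib sum_distrib_left)
  finally have "\<Phi> (Suc k) l = \<Phi> k (Suc l) - \<mu> * \<Phi> k l" by simp
  then show ?case using Suc.IH[of "Suc l"] Suc.IH[of l] Suc.prems unfolding \<Phi>_def by simp
qed

lemma jordan_block_controllable:
  assumes B: "B \<in> carrier_mat n m" and n: "n \<ge> 1" and q0: "q0 < m"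
    and last: "B $$ (n - 1, q0) \<noteq> 0"
  shows "controllable n m (jordan_block n \<mu>) B"
  unfolding controllable_iff_dual_orbit[OF jordan_block_carrier B]
proof (intro ballI impI)
  let ?J = "jordan_block n \<mu>"
  fix \<xi> assume \<xi>: "\<xi> \<in> carrier_vec n" and H: "\<forall>k<n. \<forall>q<m. (B\<^sup>T *\<^sub>v dual_orbit ?J k \<xi>) $ q = 0"
  define f where "f l i = dual_orbit ?J l \<xi> $ i" for l i
  define b where "b r = B $$ (r, q0)" for r
  have orbit: "\<And>l. dual_orbit ?J l \<xi> \<in> carrier_vec n" using dual_orbit_carrier[OF jordan_block_carrier \<xi>] .
  have pair0: "(\<Sum>r<n. b r * f l r) = 0" if "l < n" for l
    using H that q0 B mult_mat_vec_index_sum[of "B\<^sup>T" m n, OF _ orbit q0, of l]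
    by (simp add: b_def f_def)
  have rec: "f (Suc l) i = \<mu> * f l i + (if 1 \<le> i then f l (i - 1) else 0)" if "i < n" for l i
    unfolding f_def dual_orbit_Suc using transpose_jordan_block_mult_vec_index[OF orbit that] .
  have "\<xi> $ t = 0" if "t < n" for t
    using that
  proof (induction t rule: less_induct)
    case (less t)
    define k where "k = n - 1 - t"
    have "0 = (\<Sum>r<n. b r * (if k \<le> r then f 0 (r - k) else 0))"
      using jordan_shifted_pairings_vanish[where f=f and b=b and n=n and \<mu>=\<mu>, OF rec pair0, of k 0] less.prems unfolding k_def by simp
    also have "\<dots> = (\<Sum>r<Suc (n - 1). b r * (if k \<le> r then \<xi> $ (r - k) else 0))"
      using n by (simp add: f_def cong: if_cong)
    also have "\<dots> = (\<Sum>r<n - 1. b r * (if k \<le> r then \<xi> $ (r - k) else 0)) + b (n - 1) * \<xi> $ t"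
      unfolding sum.lessThan_Suc using less.prems unfolding k_def by simp
    also have "(\<Sum>r<n - 1. b r * (if k \<le> r then \<xi> $ (r - k) else 0)) = 0"
      using less.IH less.prems unfolding k_def by (intro sum.neutral) auto
    finally show ?case using last unfolding b_def by simp
  qed
  then show "\<xi> = 0\<^sub>v n" using \<xi> by (intro eq_vecI) auto
qed

lemma jordan_trajectory_eq:
  fixes \<mu> :: real
  assumes B: "B \<in> carrier_mat n m" and vs: "\<And>t. v t \<in> carrier_vec m"
    and xs: "\<And>t. x t \<in> carrier_vec n"
    and dyn: "\<And>t. x (Suc t) = jordan_block n \<mu> *\<^sub>v x t + B *\<^sub>v v t"
    and x0: "\<And>r. r < n \<Longrightarrow> x 0 $ r = e r 0"
    and rec: "\<And>r t. r < n \<Longrightarrow> r + Suc t \<le> S \<Longrightarrow>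
      e r (Suc t) = \<mu> * e r t + e (Suc r) t + (B *\<^sub>v v t) $ r"
    and top: "\<And>t. n + t \<le> S \<Longrightarrow> e n t = 0"
  shows "r < n \<Longrightarrow> r + t \<le> S \<Longrightarrow> x t $ r = e r t"
proof (induction t arbitrary: r)
  case 0
  then show ?case using x0 by simp
next
  case (Suc t)
  have next_eq: "(if Suc r < n then x t $ Suc r else 0) = e (Suc r) t"
  proof (cases "Suc r < n")
    case False
    then have "Suc r = n" using Suc.prems by simp
    then show ?thesis using top[of t] Suc.prems by auto
  qed (use Suc.IH[of "Suc r"] Suc.prems in simp)
  have "x (Suc t) $ r = \<mu> * x t $ r + (if Suc r < n then x t $ Suc r else 0) + (B *\<^sub>v v t) $ r"
    using dyn[of t] B xs vs Suc.prems jordan_block_mult_vec_index[OF xs[of t] Suc.prems(1), of \<mu>] by simp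
  then show ?case using Suc.IH[of r] Suc.prems next_eq rec[of r t] by simp
qed

lemma hankel_image_output_relation:
  assumes LT: "L \<le> T" and p: "p \<ge> 1" and L: "L \<ge> 1"
    and rel: "\<And>j. j + L \<le> T \<Longrightarrow> y j $ 0 + (\<Sum>l<L. \<Sum>q<m. \<eta> l q * u (j+l) $ q) = 0"
    and w: "w \<in> mat_image (hankel m L T u @\<^sub>r hankel p L T y)"
  shows "w $ (m * L) + (\<Sum>l<L. \<Sum>q<m. \<eta> l q * w $ (l * m + q)) = 0"
proof -
  obtain c where c: "c \<in> carrier_vec (T - L + 1)"
    and wc: "w = stack m L (shift_comb m c u) @\<^sub>v stack p L (shift_comb p c y)"
    using w unfolding hankel_data_image Setcompr_eq_image by (rule imageE)
  have out: "w $ (m * L) = (\<Sum>j<T - L + 1. c $ j * y j $ 0)"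
    using wc p L c by (simp add: stack_index shift_comb_index)
  have inp: "w $ (l * m + q) = (\<Sum>j<T - L + 1. c $ j * u (l + j) $ q)" if "l < L" "q < m" for l q
    using wc that c block_index_less[OF that] by (simp add: stack_index_block shift_comb_index)
  have "w $ (m * L) + (\<Sum>l<L. \<Sum>q<m. \<eta> l q * w $ (l * m + q))
      = (\<Sum>j<T - L + 1. c $ j * y j $ 0) + (\<Sum>l<L. \<Sum>q<m. \<Sum>j<T - L + 1. c $ j * (\<eta> l q * u (j + l) $ q))"
    unfolding out
  proof (intro arg_cong2[where f="(+)"] refl sum.cong)
    fix l q assume "l \<in> {..<L}" "q \<in> {..<m}"
    then have "\<eta> l q * w $ (l * m + q) = (\<Sum>j<T - L + 1. \<eta> l q * (c $ j * u (l + j) $ q))"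
      unfolding sum_distrib_left[symmetric] by (simp add: inp)
    also have "\<dots> = (\<Sum>j<T - L + 1. c $ j * (\<eta> l q * u (j + l) $ q))"
      by (intro sum.cong refl) (simp add: mult_ac add.commute)
    finally show "\<eta> l q * w $ (l * m + q) = (\<Sum>j<T - L + 1. c $ j * (\<eta> l q * u (j + l) $ q))" .
  qed
  also have "\<dots> = (\<Sum>j<T - L + 1. c $ j * (y j $ 0 + (\<Sum>l<L. \<Sum>q<m. \<eta> l q * u (j + l) $ q)))"
    unfolding distrib_left sum.distrib sum_distrib_left
    by (simp only: sum.swap[of _ "{..<m}" "{..<T - L + 1}"] sum.swap[of _ "{..<L}" "{..<T - L + 1}"])
  also have "\<dots> = 0" using rel LT by (intro sum.neutral) simp
  finally show ?thesis .
qed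

lemma mult_mat_zero_vec: "A \<in> carrier_mat r c \<Longrightarrow> A *\<^sub>v 0\<^sub>v c = 0\<^sub>v r"
  by (intro eq_vecI) (auto simp: mult_mat_vec_index_sum)

lemma zero_mat_mult_vec: "v \<in> carrier_vec c \<Longrightarrow> 0\<^sub>m r c *\<^sub>v v = 0\<^sub>v r"
  by (intro eq_vecI) (auto simp: mult_mat_vec_index_sum)

lemma first_coordinate_mult_vec:
  fixes v :: "real vec"
  assumes p: "p \<ge> 1" and n: "n \<ge> 1" and v: "v \<in> carrier_vec n"
  shows "(mat p n (\<lambda>(i, k). if i = 0 \<and> k = 0 then 1 else 0) *\<^sub>v v) $ 0 = v $ 0"
proof -
  let ?C = "mat p n (\<lambda>(i, k). if i = 0 \<and> k = 0 then 1 else 0) :: real mat"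
  have "(?C *\<^sub>v v) $ 0 = (\<Sum>k<n. ?C $$ (0, k) * v $ k)"
    using mult_mat_vec_index_sum[of ?C p n, OF _ v, of 0] p by simp
  also have "\<dots> = (\<Sum>k<n. if k = 0 then v $ k else 0)"
    using p by (intro sum.cong refl) simp
  finally show ?thesis using n by (simp add: sum.delta)
qed

lemma zero_input_response:
  assumes A: "A \<in> carrier_mat n n" and B: "B \<in> carrier_mat n m"
    and C: "C \<in> carrier_mat p n" and D: "D \<in> carrier_mat p m"
    and x0: "x0 \<in> carrier_vec n"
  obtains y where "((\<lambda>_. 0\<^sub>v m), y) \<in> behavior n m p A B C D" and "y 0 = C *\<^sub>v x0"
proof -
  define x where "x = rec_nat x0 (\<lambda>_ v. A *\<^sub>v v)"
  have x: "x t \<in> carrier_vec n" for t by (induction t) (use A x0 in \<open>simp_all add: x_def\<close>)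
  have "((\<lambda>_. 0\<^sub>v m), (\<lambda>t. C *\<^sub>v x t)) \<in> behavior n m p A B C D"
    by (rule behaviorI[where x=x]) (use A B C D x in \<open>simp_all add: x_def mult_mat_zero_vec\<close>)
  then show ?thesis using that by (simp add: x_def)
qed

definition quotient_window_state ::
    "nat \<Rightarrow> nat \<Rightarrow> real \<Rightarrow> (nat \<Rightarrow> nat \<Rightarrow> real) \<Rightarrow> (nat \<Rightarrow> real vec) \<Rightarrow> nat \<Rightarrow> nat \<Rightarrow> real" where
  "quotient_window_state m N \<mu> g u k j =
     (\<Sum>q<m. poly_window N (synthetic_div_iter \<mu> (window_poly g N q) k) (\<lambda>t. u t $ q) j)"

lemma quotient_window_state_0:
  "quotient_window_state m N \<mu> g u 0 j = (\<Sum>r<N. \<Sum>q<m. g r q * u (j + r) $ q)"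
  unfolding quotient_window_state_def poly_window_def
  by (simp add: coeff_window_poly sum.swap[of _ "{..<m}"])

lemma quotient_window_state_Suc:
  assumes N: "N \<ge> 1" and k: "Suc k < N"
  shows "quotient_window_state m N \<mu> g u k j =
    quotient_window_state m N \<mu> g u (Suc k) (Suc j) - \<mu> * quotient_window_state m N \<mu> g u (Suc k) j
    + (\<Sum>q<m. poly (synthetic_div_iter \<mu> (window_poly g N q) k) \<mu> * u j $ q)"
  unfolding quotient_window_state_def poly_window_synthetic_div_iter[OF degree_window_poly[OF N] k]
  by (simp add: sum.distrib sum_subtractf sum_distrib_left)

lemma quotient_window_state_tail:
  assumes L: "L \<ge> 1" "L \<le> N" and k: "N \<le> k + L"
  shows "quotient_window_state m N \<mu> g u k j =
    (\<Sum>l<L. \<Sum>q<m. coeff (synthetic_div_iter \<mu> (window_poly g N q) k) l * u (j + l) $ q)"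
proof -
  have "degree (synthetic_div_iter \<mu> (window_poly g N q) k) < L" for q
    using degree_window_poly[of N g q] L k unfolding degree_synthetic_div_iter by arith
  then have "poly_window N (synthetic_div_iter \<mu> (window_poly g N q) k) (\<lambda>t. u t $ q) j =
      (\<Sum>l<L. coeff (synthetic_div_iter \<mu> (window_poly g N q) k) l * u (j + l) $ q)" for q
    using L by (intro poly_window_lessThan) simp_all
  then show ?thesis
    unfolding quotient_window_state_def by (simp add: sum.swap[of _ "{..<m}" "{..<L}"])
qed

text \<open>The system matrix is a Jordan block whose eigenvalue \<mu> is not a root of some window
  polynomial g_q; the state components are the pairings of the windows of u with the
  iterated quotients of the g_q by z - \<mu>, the remainders of these divisions form the input
  matrix, and the output is the first state component.\<close>

lemma annihilating_system:
  fixes u :: "nat \<Rightarrow> real vec" and g :: "nat \<Rightarrow> nat \<Rightarrow> real"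
  assumes n: "n \<ge> 1" and p: "p \<ge> 1" and L: "L \<ge> 1" and us: "\<And>t. u t \<in> carrier_vec m"
    and g: "\<exists>r<n + L. \<exists>q<m. g r q \<noteq> 0"
    and grel: "\<forall>j. j + (n + L) \<le> T \<longrightarrow> (\<Sum>r<n + L. \<Sum>q<m. g r q * u (j+r) $ q) = 0"
  obtains A B C D y \<eta> where "(A, B, C, D) \<in> M_cont n m p" and "(u, y) \<in> behavior n m p A B C D"
    and "\<forall>j. j + L \<le> T \<longrightarrow> y j $ 0 + (\<Sum>l<L. \<Sum>q<m. \<eta> l q * u (j+l) $ q) = 0"
    and "(C *\<^sub>v unit_vec n 0) $ 0 = 1"
proof -
  define N where "N = n + L"
  obtain \<mu> q0 where q0: "q0 < m" and \<mu>: "poly (window_poly g N q0) \<mu> \<noteq> 0"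
    using window_poly_non_root[OF g[folded N_def]] by blast
  define Q where "Q k q = synthetic_div_iter \<mu> (window_poly g N q) k" for k q
  define e where "e r j = quotient_window_state m N \<mu> g u (n - r) j" for r j
  define \<eta> where "\<eta> l q = - coeff (Q n q) l" for l q
  define A where "A = jordan_block n \<mu>"
  define B where "B = mat n m (\<lambda>(r, q). - poly (Q (n - Suc r) q) \<mu>)"
  define C :: "real mat" where "C = mat p n (\<lambda>(i, k). if i = 0 \<and> k = 0 then 1 else 0)"
  define D :: "real mat" where "D = 0\<^sub>m p m"
  have A: "A \<in> carrier_mat n n" and B: "B \<in> carrier_mat n m"
    and C: "C \<in> carrier_mat p n" and D: "D \<in> carrier_mat p m"
    unfolding A_def B_def C_def D_def by simp_all
  have e_rec: "e r (Suc j) = \<mu> * e r j + e (Suc r) j + (B *\<^sub>v u j) $ r" if r: "r < n" for r j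
  proof -
    have "Suc (n - Suc r) < N" and "Suc (n - Suc r) = n - r" using r L unfolding N_def by auto
    then have "e (Suc r) j = e r (Suc j) - \<mu> * e r j + (\<Sum>q<m. poly (Q (n - Suc r) q) \<mu> * u j $ q)"
      using quotient_window_state_Suc[of N "n - Suc r" m \<mu> g u j] n
      unfolding e_def Q_def N_def by simp
    moreover have "(B *\<^sub>v u j) $ r = - (\<Sum>q<m. poly (Q (n - Suc r) q) \<mu> * u j $ q)"
      using r mult_mat_vec_index_sum[OF B us r] by (simp add: B_def sum_negf)
    ultimately show ?thesis by simp
  qed
  have e_top: "e n j = 0" if "n + j \<le> T - L" for j
    using grel that n unfolding e_def by (simp add: quotient_window_state_0 N_def)
  have e_out: "e 0 j + (\<Sum>l<L. \<Sum>q<m. \<eta> l q * u (j + l) $ q) = 0" for j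
    using L unfolding e_def \<eta>_def Q_def N_def
    by (simp add: quotient_window_state_tail sum_negf)
  have "B $$ (n - 1, q0) \<noteq> 0" using n q0 \<mu> unfolding B_def Q_def by simp
  then have "controllable n m A B" unfolding A_def by (rule jordan_block_controllable[OF B n q0])
  then have "(A, B, C, D) \<in> M_cont n m p" using A B C D unfolding M_cont_def by simp
  define x where "x = rec_nat (vec n (\<lambda>r. e r 0)) (\<lambda>t v. A *\<^sub>v v + B *\<^sub>v u t)"
  have xs: "x t \<in> carrier_vec n" for t by (induction t) (use A B us in \<open>simp_all add: x_def\<close>)
  have dyn: "x (Suc t) = A *\<^sub>v x t + B *\<^sub>v u t" for t by (simp add: x_def)
  have x_eq: "x j $ 0 = e 0 j" if "j + L \<le> T" for j
    by (rule jordan_trajectory_eq[where e=e and S="T - L" and \<mu>=\<mu> and x=x and v=u, OF B us xs dyn[unfolded A_def]])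
      (use e_rec e_top n that in \<open>simp_all add: x_def\<close>)
  have C_first: "(C *\<^sub>v v) $ 0 = v $ 0" if "v \<in> carrier_vec n" for v
    unfolding C_def using first_coordinate_mult_vec[OF p n that] .
  have "D *\<^sub>v u t = 0\<^sub>v p" for t unfolding D_def using zero_mat_mult_vec[OF us] .
  then have "(u, \<lambda>t. C *\<^sub>v x t) \<in> behavior n m p A B C D"
    by (intro behaviorI[where x=x]) (use C xs dyn us in simp_all)
  moreover have "\<forall>j. j + L \<le> T \<longrightarrow> (C *\<^sub>v x j) $ 0 + (\<Sum>l<L. \<Sum>q<m. \<eta> l q * u (j+l) $ q) = 0"
    using C_first[OF xs] x_eq e_out by simp
  moreover have "(C *\<^sub>v unit_vec n 0) $ 0 = 1" using C_first[of "unit_vec n 0"] n by simp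
  ultimately show ?thesis using that \<open>(A, B, C, D) \<in> M_cont n m p\<close> by blast
qed

lemma persistently_exciting_if_universal:
  fixes u :: "nat \<Rightarrow> real vec"
  assumes n: "n \<ge> 1" and m: "m \<ge> 1" and p: "p \<ge> 1" and L: "1 \<le> L" and LT: "L \<le> T"
    and us: "\<forall>t<T. u t \<in> carrier_vec m"
    and univ: "universal n m p T L u"
  shows "persistently_exciting m T (n + L) u"
proof (rule ccontr)
  assume nPE: "\<not> persistently_exciting m T (n + L) u"
  define u' where "u' t = (if t < T then u t else 0\<^sub>v m)" for t
  have u's: "\<And>t. u' t \<in> carrier_vec m" using us unfolding u'_def by auto
  have uu: "\<And>t. t < T \<Longrightarrow> u' t = u t" unfolding u'_def by simp
  have "\<not> persistently_exciting m T (n + L) u'"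
    using nPE persistently_exciting_cong[of T u' u] uu by auto
  then obtain g where gnz: "\<exists>r<n + L. \<exists>q<m. g r q \<noteq> 0"
    and grel: "\<forall>j. j + (n + L) \<le> T \<longrightarrow> (\<Sum>r<n + L. \<Sum>q<m. g r q * u' (j+r) $ q) = 0"
    using not_persistently_exciting_obtain[of m T "n + L" u'] m n by auto
  obtain A B C D y \<eta> where Mc: "(A, B, C, D) \<in> M_cont n m p"
    and bh: "(u', y) \<in> behavior n m p A B C D"
    and rel: "\<forall>j. j + L \<le> T \<longrightarrow> y j $ 0 + (\<Sum>l<L. \<Sum>q<m. \<eta> l q * u' (j+l) $ q) = 0"
    and C_unit: "(C *\<^sub>v unit_vec n 0) $ 0 = 1"
    using annihilating_system[where u=u' and T=T, OF n p L u's gnz grel] by blast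
  have carriers: "A \<in> carrier_mat n n" "B \<in> carrier_mat n m" "C \<in> carrier_mat p n" "D \<in> carrier_mat p m"
    using Mc unfolding M_cont_def by auto
  have ys: "\<forall>t<T. y t \<in> carrier_vec p" using bh unfolding behavior_def by auto
  have "stack m T u @\<^sub>v stack p T y = stack m T u' @\<^sub>v stack p T y"
    using stack_cong[of T u u' m] uu by simp
  then have "stack m T u @\<^sub>v stack p T y \<in> restricted_behavior n m p T A B C D"
    using bh unfolding restricted_behavior_def by blast
  then have image: "restricted_behavior n m p L A B C D = mat_image (hankel m L T u @\<^sub>r hankel p L T y)"
    using univ Mc ys unfolding universal_def by blast
  txt \<open>The free response from the first unit vector violates the relation satisfied by the data.\<close>
  obtain y0 where bh0: "((\<lambda>_. 0\<^sub>v m), y0) \<in> behavior n m p A B C D" and y00: "y0 0 = C *\<^sub>v unit_vec n 0"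
    using zero_input_response[OF carriers unit_vec_carrier] by blast
  define w0 where "w0 = stack m L (\<lambda>_. 0\<^sub>v m) @\<^sub>v stack p L y0"
  have "hankel m L T u = hankel m L T u'" using uu by (intro hankel_cong[OF LT]) simp
  moreover have "w0 \<in> restricted_behavior n m p L A B C D"
    using bh0 unfolding w0_def restricted_behavior_def by blast
  ultimately have "w0 \<in> mat_image (hankel m L T u' @\<^sub>r hankel p L T y)"
    using image by simp
  then have "w0 $ (m * L) + (\<Sum>l<L. \<Sum>q<m. \<eta> l q * w0 $ (l * m + q)) = 0"
    by (rule hankel_image_output_relation[OF LT p L, rotated]) (use rel in blast)
  moreover have "w0 $ (m * L) = 1" using p L C_unit y00 by (simp add: w0_def stack_index)
  moreover have "w0 $ (l * m + q) = 0" if "l < L" "q < m" for l q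
    using that block_index_less[OF that] by (simp add: w0_def stack_index_block)
  ultimately show False by simp
qed

theorem theorem1:
  fixes n m p T L :: nat and u :: "nat \<Rightarrow> real vec"
  assumes "n \<ge> 1" and "m \<ge> 1" and "p \<ge> 1"
    and "1 \<le> L" and "L \<le> T"
    and "\<forall>t<T. u t \<in> carrier_vec m"
  shows "universal n m p T L u \<longleftrightarrow> persistently_exciting m T (n + L) u"
  using persistently_exciting_if_universal[OF assms] universal_if_persistently_exciting[OF _ assms(5,6)]
  by blast

end
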